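(* Let $\Omega\subset\mathbb{R}^3$ be open, $T>0$, and let $A:[0,T]\times\Omega\to\mathbb{T}$ and $\gamma:[0,T]\times\Omega\to\mathbb{S}$ be sufficiently smooth (classical) fields solving $$\operatorname{div} A=0,\qquad A_t+\operatorname{curl} S\gamma=0,\qquad S\gamma_t-\operatorname{sym}\operatorname{curl} A=0,\qquad \operatorname{div}\operatorname{div} S\gamma=0,$$ with initial conditions $A(0)=A_0$, $\gamma(0)=\gamma_0$. Define the gauge functions $$\alpha:=\tfrac12\operatorname{tr}\gamma,\qquad \beta(t):=\tfrac12\int_0^t \operatorname{div} S\gamma(s)\,ds+\operatorname{vskw} A_0 .$$ Then $\gamma$ satisfies the linearized York version of the ADM equations: $$\gamma_{tt}+S\operatorname{inc}\gamma-2\operatorname{hess}\alpha-2\operatorname{def}\beta_t=0,\qquad \operatorname{div} S(\gamma_t-2\operatorname{def}\beta)=0,\qquad \operatorname{div}\operatorname{div} S\gamma=0 .$$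
   Context: $\mathbb{M}$ is the space of real $3\times3$ matrices, $\mathbb{S}$ the symmetric ones, $\mathbb{T}$ the trace-free ones. For $M\in\mathbb{M}$: $S(M):=M^\top-\operatorname{tr}(M)I$; $\operatorname{sym}M$ is the symmetric part; $(\operatorname{vskw}M)_i:=-\tfrac12\epsilon_{ijk}M_{jk}$ (Levi-Civita symbol, summation convention). Differential operators act column-wise on matrix fields: $(\operatorname{curl}M)_{ij}=\epsilon_{ikl}\partial_kM_{lj}$, $(\operatorname{div}M)_i=\partial_jM_{ji}$; for a vector field $v$, $(\operatorname{grad}v)_{ij}=\partial_iv_j$, $\operatorname{def}v:=\operatorname{sym}\operatorname{grad}v$; for a scalar $u$, $\operatorname{hess}u$ is the Hessian matrix; $\operatorname{div}\operatorname{div}\sigma:=\operatorname{div}(\operatorname{div}\sigma)$; $\operatorname{inc}M:=\operatorname{curl}\big((\operatorname{curl}M)^\top\big)$. Subscript $t$ denotes time derivative. *)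

theory Defs
  imports "HOL-Analysis.Analysis"
begin

type_synonym vec3 = "real^3"
type_synonym mat3 = "real^3^3"

text \<open>Pointwise algebra on 3x3 matrices. Convention: M $ i $ j is the (i,j) entry.\<close>

definition symm :: "mat3 \<Rightarrow> mat3" where
  "symm M = (1/2) *\<^sub>R (M + transpose M)"

definition Smat :: "mat3 \<Rightarrow> mat3" where
  "Smat M = transpose M - trace M *\<^sub>R mat 1"

definition levi :: "3 \<Rightarrow> 3 \<Rightarrow> 3 \<Rightarrow> real" where
  "levi i j k =
     (if (i, j, k) \<in> {(1, 2, 3), (2, 3, 1), (3, 1, 2)} then 1
      else if (i, j, k) \<in> {(1, 3, 2), (3, 2, 1), (2, 1, 3)} then -1
      else 0)"

definition vskw :: "mat3 \<Rightarrow> vec3" where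
  "vskw M = (\<chi> i. - (1/2) * (\<Sum>j\<in>UNIV. \<Sum>k\<in>UNIV. levi i j k * M $ j $ k))"

definition symmetric_mat :: "mat3 \<Rightarrow> bool" where
  "symmetric_mat M \<longleftrightarrow> transpose M = M"

definition tracefree_mat :: "mat3 \<Rightarrow> bool" where
  "tracefree_mat M \<longleftrightarrow> trace M = 0"

definition pd :: "3 \<Rightarrow> (vec3 \<Rightarrow> 'a::real_normed_vector) \<Rightarrow> vec3 \<Rightarrow> 'a" where
  "pd k G x = vector_derivative (\<lambda>h. G (x + h *\<^sub>R axis k 1)) (at 0)"

definition curlM :: "(vec3 \<Rightarrow> mat3) \<Rightarrow> vec3 \<Rightarrow> mat3" where
  "curlM G x = (\<chi> i j. \<Sum>k\<in>UNIV. \<Sum>l\<in>UNIV. levi i k l * (pd k G x) $ l $ j)"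

definition divM :: "(vec3 \<Rightarrow> mat3) \<Rightarrow> vec3 \<Rightarrow> vec3" where
  "divM G x = (\<chi> i. \<Sum>j\<in>UNIV. (pd j G x) $ j $ i)"

definition divv :: "(vec3 \<Rightarrow> vec3) \<Rightarrow> vec3 \<Rightarrow> real" where
  "divv v x = (\<Sum>j\<in>UNIV. (pd j v x) $ j)"

definition divdiv :: "(vec3 \<Rightarrow> mat3) \<Rightarrow> vec3 \<Rightarrow> real" where
  "divdiv G x = divv (divM G) x"

definition gradv :: "(vec3 \<Rightarrow> vec3) \<Rightarrow> vec3 \<Rightarrow> mat3" where
  "gradv v x = (\<chi> i j. (pd i v x) $ j)"

definition defv :: "(vec3 \<Rightarrow> vec3) \<Rightarrow> vec3 \<Rightarrow> mat3" where
  "defv v x = symm (gradv v x)"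

definition hess :: "(vec3 \<Rightarrow> real) \<Rightarrow> vec3 \<Rightarrow> mat3" where
  "hess u x = (\<chi> i j. pd i (\<lambda>y. pd j u y) x)"

definition inc :: "(vec3 \<Rightarrow> mat3) \<Rightarrow> vec3 \<Rightarrow> mat3" where
  "inc G x = curlM (\<lambda>y. transpose (curlM G y)) x"

definition dt :: "real \<Rightarrow> (real \<Rightarrow> vec3 \<Rightarrow> 'a::real_normed_vector) \<Rightarrow> real \<Rightarrow> vec3 \<Rightarrow> 'a" where
  "dt T F t x = vector_derivative (\<lambda>s. F s x) (at t within {0..T})"

text \<open>Smoothness (C-infinity) on an open set U: all iterated directional derivatives
  exist and are continuous on U.\<close>

definition ddir :: "'p::real_normed_vector \<Rightarrow> ('p \<Rightarrow> 'a::real_normed_vector) \<Rightarrow> 'p \<Rightarrow> 'a" where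
  "ddir v f p = vector_derivative (\<lambda>h. f (p + h *\<^sub>R v)) (at 0)"

fun iterdd :: "'p::real_normed_vector list \<Rightarrow> ('p \<Rightarrow> 'a::real_normed_vector) \<Rightarrow> 'p \<Rightarrow> 'a" where
  "iterdd [] f = f"
| "iterdd (v # vs) f = ddir v (iterdd vs f)"

definition smooth_on :: "'p::real_normed_vector set \<Rightarrow> ('p \<Rightarrow> 'a::real_normed_vector) \<Rightarrow> bool" where
  "smooth_on U f \<longleftrightarrow>
     (\<forall>vs. continuous_on U (iterdd vs f) \<and>
        (\<forall>v. \<forall>p\<in>U. ((\<lambda>h. iterdd vs f (p + h *\<^sub>R v)) has_vector_derivative
                        ddir v (iterdd vs f) p) (at 0)))"

end

theory Submission
  imports Defs
begin

text \<open>Differentiating \<open>S\<gamma>\<^sub>t = sym curl A\<close> in time and inserting \<open>A\<^sub>t = - curl S\<gamma>\<close> gives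
  \<open>S\<gamma>\<^sub>t\<^sub>t = - sym curl curl S\<gamma>\<close>. For symmetric \<open>\<gamma>\<close> with \<open>div div S\<gamma> = 0\<close>, a pointwise identity
  in the second derivatives of \<open>\<gamma>\<close> turns this into the evolution equation, once \<open>\<alpha> = tr \<gamma> / 2\<close>
  and \<open>\<beta>\<^sub>t = div S\<gamma> / 2\<close> are inserted.

  For the momentum constraint, \<open>div S\<gamma>\<^sub>t = div sym curl A\<close>. By the same two equations and the
  derivatives of the constraint, its time derivative is \<open>div S def (div S\<gamma>) = div S (2 def \<beta>\<^sub>t)\<close>,
  so \<open>div S\<gamma>\<^sub>t\<close> and \<open>div S (2 def \<beta>)\<close> differ by their common value at \<open>t = 0\<close>, where
  \<open>div A = 0\<close> gives \<open>div sym curl A\<^sub>0 = div S (2 def (vskw A\<^sub>0))\<close>.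

  All identities are checked in coordinates; mixed partial derivatives commute because the
  fields are smooth on an open space-time cylinder.\<close>

section \<open>Directional derivatives\<close>

definition has_ddir :: "'p::real_normed_vector \<Rightarrow> ('p \<Rightarrow> 'a::real_normed_vector) \<Rightarrow> 'p \<Rightarrow> 'a \<Rightarrow> bool" where
  "has_ddir v f p D \<longleftrightarrow> ((\<lambda>h. f (p + h *\<^sub>R v)) has_vector_derivative D) (at 0)"

lemma has_ddir_imp_ddir_eq: "has_ddir v f p D \<Longrightarrow> ddir v f p = D"
  unfolding has_ddir_def ddir_def by (rule vector_derivative_at)

lemma has_ddir_unique: "has_ddir v f p D \<Longrightarrow> has_ddir v f p E \<Longrightarrow> D = E"
  using has_ddir_imp_ddir_eq by metis

lemma iterdd_append: "iterdd (vs @ ws) f = iterdd vs (iterdd ws f)"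
  by (induction vs) auto

lemma smooth_on_has_ddir: "smooth_on U f \<Longrightarrow> p \<in> U \<Longrightarrow> has_ddir v f p (ddir v f p)"
  unfolding smooth_on_def has_ddir_def by (metis iterdd.simps(1))

lemma smooth_on_imp_continuous_on: "smooth_on U f \<Longrightarrow> continuous_on U f"
  unfolding smooth_on_def by (metis iterdd.simps(1))

lemma smooth_on_ddir:
  assumes "smooth_on U f"
  shows "smooth_on U (ddir v f)"
  unfolding smooth_on_def
proof (rule allI, rule conjI)
  fix vs
  have iter: "iterdd vs (ddir v f) = iterdd (vs @ [v]) f" by (simp add: iterdd_append)
  from assms show "continuous_on U (iterdd vs (ddir v f))"
    unfolding smooth_on_def iter by blast
  from assms show "\<forall>w. \<forall>p\<in>U. ((\<lambda>h. iterdd vs (ddir v f) (p + h *\<^sub>R w)) has_vector_derivative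
      ddir w (iterdd vs (ddir v f)) p) (at 0)"
    unfolding smooth_on_def iter by blast
qed

lemma smooth_on_iterdd: "smooth_on U f \<Longrightarrow> smooth_on U (iterdd vs f)"
  by (induction vs) (simp_all add: smooth_on_ddir)

lemma has_ddir_imp_has_vector_derivative:
  assumes "has_ddir v f (p + s *\<^sub>R v) D"
  shows "((\<lambda>r. f (p + r *\<^sub>R v)) has_vector_derivative D) (at s)"
proof -
  have shift: "((\<lambda>r. r - s) has_vector_derivative 1) (at s)"
    by (auto intro!: derivative_eq_intros)
  have "((\<lambda>h. f (p + s *\<^sub>R v + h *\<^sub>R v)) has_vector_derivative D) (at ((\<lambda>r. r - s) s))"
    using assms unfolding has_ddir_def by simp
  from vector_diff_chain_at[OF shift this]
  have "((\<lambda>h. f (p + s *\<^sub>R v + h *\<^sub>R v)) \<circ> (\<lambda>r. r - s) has_vector_derivative 1 *\<^sub>R D) (at s)" .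
  moreover have "(\<lambda>h. f (p + s *\<^sub>R v + h *\<^sub>R v)) \<circ> (\<lambda>r. r - s) = (\<lambda>r. f (p + r *\<^sub>R v))"
    by (auto simp: o_def algebra_simps)
  ultimately show ?thesis by simp
qed

lemma has_ddir_transform_open:
  assumes "open U" "p \<in> U" "\<And>q. q \<in> U \<Longrightarrow> f q = g q" "has_ddir v f p D"
  shows "has_ddir v g p D"
proof -
  have "open {h::real. p + h *\<^sub>R v \<in> U}"
    using open_vimage[OF assms(1), of "\<lambda>h. p + h *\<^sub>R v"] by (simp add: vimage_def continuous_intros)
  from has_vector_derivative_transform_within_open[OF assms(4)[unfolded has_ddir_def] this]
  show ?thesis unfolding has_ddir_def using assms(2,3) by simp
qed

lemma ddir_cong_open:
  assumes "open U" "p \<in> U" "\<And>q. q \<in> U \<Longrightarrow> f q = g q"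
  shows "ddir v f p = ddir v g p"
proof -
  have "has_ddir v f p D \<longleftrightarrow> has_ddir v g p D" for D
    using has_ddir_transform_open[OF assms(1,2)] assms(3) by (metis (full_types))
  then show ?thesis unfolding ddir_def has_ddir_def vector_derivative_def by simp
qed

lemma has_ddir_bounded_linear:
  "bounded_linear L \<Longrightarrow> has_ddir v f p D \<Longrightarrow> has_ddir v (\<lambda>q. L (f q)) p (L D)"
  unfolding has_ddir_def by (rule bounded_linear.has_vector_derivative)

lemma has_ddir_add: "has_ddir v f p D \<Longrightarrow> has_ddir v g p E \<Longrightarrow> has_ddir v (\<lambda>q. f q + g q) p (D + E)"
  unfolding has_ddir_def by (rule has_vector_derivative_add)

lemma has_ddir_diff: "has_ddir v f p D \<Longrightarrow> has_ddir v g p E \<Longrightarrow> has_ddir v (\<lambda>q. f q - g q) p (D - E)"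
  unfolding has_ddir_def by (rule has_vector_derivative_diff)

lemma has_ddir_const: "has_ddir v (\<lambda>q. c) p 0"
  unfolding has_ddir_def by (rule has_vector_derivative_const)

lemma has_ddir_sum:
  "(\<And>i. i \<in> I \<Longrightarrow> has_ddir v (f i) p (D i)) \<Longrightarrow> has_ddir v (\<lambda>q. \<Sum>i\<in>I. f i q) p (\<Sum>i\<in>I. D i)"
  unfolding has_ddir_def has_vector_derivative_def
  by (drule has_derivative_sum) (simp add: scaleR_sum_right)

lemmas has_ddir_scaleR = has_ddir_bounded_linear[OF bounded_linear_scaleR_right]
lemmas has_ddir_uminus = has_ddir_bounded_linear[OF bounded_linear_minus[OF bounded_linear_ident]]
lemmas has_ddir_vec_nth = has_ddir_bounded_linear[OF bounded_linear_vec_nth]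

lemma bounded_linear_axis: "bounded_linear (axis i :: 'a::euclidean_space \<Rightarrow> 'a^'n)"
  unfolding linear_conv_bounded_linear[symmetric]
  by (rule linearI) (simp_all add: axis_def vec_eq_iff)

lemma sum_axis: "(\<Sum>i\<in>UNIV. axis i (x i)) = (\<chi> i. x i)"
  by (simp add: vec_eq_iff axis_def)

lemma has_ddir_vec_lambda:
  fixes f :: "'n::finite \<Rightarrow> 'p::real_normed_vector \<Rightarrow> 'a::euclidean_space"
  assumes "\<And>i. has_ddir v (f i) p (D i)"
  shows "has_ddir v (\<lambda>q. \<chi> i. f i q) p (\<chi> i. D i)"
proof -
  have "has_ddir v (\<lambda>q. \<Sum>i\<in>UNIV. axis i (f i q)) p (\<Sum>i\<in>UNIV. axis i (D i))"
    by (intro has_ddir_sum has_ddir_bounded_linear[OF bounded_linear_axis] assms)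
  then show ?thesis by (simp only: sum_axis)
qed

lemma has_integral_vec_lambda:
  fixes f :: "'n::finite \<Rightarrow> real \<Rightarrow> 'a::euclidean_space"
  assumes "\<And>i. (f i has_integral I i) S"
  shows "((\<lambda>s. \<chi> i. f i s) has_integral (\<chi> i. I i)) S"
proof -
  have "((\<lambda>s. \<Sum>i\<in>UNIV. axis i (f i s)) has_integral (\<Sum>i\<in>UNIV. axis i (I i))) S"
    using has_integral_linear[OF assms bounded_linear_axis] by (intro has_integral_sum) (simp_all add: o_def)
  then show ?thesis by (simp only: sum_axis)
qed

section \<open>Symmetry of second directional derivatives\<close>

lemma mvt_has_vector_derivative:
  fixes g :: "real \<Rightarrow> 'a::real_inner"
  assumes h: "0 < h" and g': "\<And>s. 0 \<le> s \<Longrightarrow> s \<le> h \<Longrightarrow> (g has_vector_derivative g' s) (at s)"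
  shows "\<exists>s\<in>{0<..<h}. norm (g h - g 0) \<le> h * norm (g' s)"
proof -
  have cont: "continuous_on {0..h} g"
  proof (rule continuous_at_imp_continuous_on, rule ballI)
    fix s assume "s \<in> {0..h}"
    with g' show "isCont g s" by (auto intro: has_vector_derivative_continuous)
  qed
  have deriv: "(g has_derivative (\<lambda>k. k *\<^sub>R g' s)) (at s)" if "0 < s" "s < h" for s
    using g'[of s] that by (simp add: has_vector_derivative_def)
  from mvt_general[OF h cont deriv] obtain s
    where "s \<in> {0<..<h}" "norm (g h - g 0) \<le> norm (h *\<^sub>R g' s)"
    by auto
  then show ?thesis using h by auto
qed

lemma has_vector_derivative_scaleR_const: "((\<lambda>s. s *\<^sub>R c) has_vector_derivative c) (at x)"
  unfolding has_vector_derivative_def by (rule bounded_linear_imp_has_derivative[OF bounded_linear_scaleR_left])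

lemma smooth_on_second_difference:
  fixes f :: "'p::real_normed_vector \<Rightarrow> 'a::real_inner"
  assumes sm: "smooth_on U f" and h: "0 < h"
    and box: "\<And>a b. 0 \<le> a \<Longrightarrow> a \<le> h \<Longrightarrow> 0 \<le> b \<Longrightarrow> b \<le> h \<Longrightarrow>
       p + a *\<^sub>R u + b *\<^sub>R v \<in> U \<and> norm (ddir v (ddir u f) (p + a *\<^sub>R u + b *\<^sub>R v) - \<psi>) \<le> e"
  shows "norm (f (p + h *\<^sub>R u + h *\<^sub>R v) - f (p + h *\<^sub>R u) - f (p + h *\<^sub>R v) + f p - (h * h) *\<^sub>R \<psi>)
           \<le> h * h * e"
proof -
  define \<phi> where "\<phi> s = f (p + h *\<^sub>R v + s *\<^sub>R u) - f (p + s *\<^sub>R u) - s *\<^sub>R (h *\<^sub>R \<psi>)" for s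
  define \<phi>' where "\<phi>' s = ddir u f (p + h *\<^sub>R v + s *\<^sub>R u) - ddir u f (p + s *\<^sub>R u) - h *\<^sub>R \<psi>" for s
  have "(\<phi> has_vector_derivative \<phi>' s) (at s)" if "0 \<le> s" "s \<le> h" for s
  proof -
    have "p + h *\<^sub>R v + s *\<^sub>R u \<in> U" "p + s *\<^sub>R u \<in> U"
      using box[of s h] box[of s 0] that h by (simp_all add: add_ac)
    then have "((\<lambda>s. f (p + h *\<^sub>R v + s *\<^sub>R u)) has_vector_derivative ddir u f (p + h *\<^sub>R v + s *\<^sub>R u)) (at s)"
      and "((\<lambda>s. f (p + s *\<^sub>R u)) has_vector_derivative ddir u f (p + s *\<^sub>R u)) (at s)"
      by (simp_all add: has_ddir_imp_has_vector_derivative smooth_on_has_ddir[OF sm])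
    then show ?thesis unfolding \<phi>_def \<phi>'_def
      by (intro has_vector_derivative_diff has_vector_derivative_scaleR_const)
  qed
  then obtain s where s: "s \<in> {0<..<h}" "norm (\<phi> h - \<phi> 0) \<le> h * norm (\<phi>' s)"
    using mvt_has_vector_derivative[OF h] by blast
  define \<eta> where "\<eta> r = ddir u f (p + s *\<^sub>R u + r *\<^sub>R v) - r *\<^sub>R \<psi>" for r
  define \<eta>' where "\<eta>' r = ddir v (ddir u f) (p + s *\<^sub>R u + r *\<^sub>R v) - \<psi>" for r
  have "(\<eta> has_vector_derivative \<eta>' r) (at r)" if "0 \<le> r" "r \<le> h" for r
  proof -
    have "p + s *\<^sub>R u + r *\<^sub>R v \<in> U" using box[of s r] that s by simp
    then have "((\<lambda>r. ddir u f (p + s *\<^sub>R u + r *\<^sub>R v)) has_vector_derivative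
        ddir v (ddir u f) (p + s *\<^sub>R u + r *\<^sub>R v)) (at r)"
      by (rule has_ddir_imp_has_vector_derivative[OF smooth_on_has_ddir[OF smooth_on_ddir[OF sm]]])
    then show ?thesis unfolding \<eta>_def \<eta>'_def
      by (intro has_vector_derivative_diff has_vector_derivative_scaleR_const)
  qed
  then obtain r where r: "r \<in> {0<..<h}" "norm (\<eta> h - \<eta> 0) \<le> h * norm (\<eta>' r)"
    using mvt_has_vector_derivative[OF h] by blast
  have "norm (\<eta>' r) \<le> e" using box[of s r] s r by (simp add: \<eta>'_def)
  moreover have "\<phi>' s = \<eta> h - \<eta> 0" by (simp add: \<eta>_def \<phi>'_def add_ac)
  ultimately have "norm (\<phi>' s) \<le> h * e"
    using r(2) h by (metis mult_left_mono less_imp_le order_trans)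
  then have "norm (\<phi> h - \<phi> 0) \<le> h * (h * e)"
    using s(2) h by (meson mult_left_mono less_imp_le order_trans)
  moreover have "\<phi> h - \<phi> 0 = f (p + h *\<^sub>R u + h *\<^sub>R v) - f (p + h *\<^sub>R u) - f (p + h *\<^sub>R v) + f p - (h * h) *\<^sub>R \<psi>"
    unfolding \<phi>_def by (simp add: algebra_simps)
  ultimately show ?thesis by (simp add: mult.assoc)
qed

lemma smooth_on_ddir_commute:
  fixes f :: "'p::real_normed_vector \<Rightarrow> 'a::real_inner"
  assumes U: "open U" and sm: "smooth_on U f" and p: "p \<in> U"
  shows "ddir u (ddir v f) p = ddir v (ddir u f) p"
proof -
  define \<psi>\<^sub>u\<^sub>v where "\<psi>\<^sub>u\<^sub>v = ddir v (ddir u f)"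
  define \<psi>\<^sub>v\<^sub>u where "\<psi>\<^sub>v\<^sub>u = ddir u (ddir v f)"
  have "norm (\<psi>\<^sub>v\<^sub>u p - \<psi>\<^sub>u\<^sub>v p) \<le> 2 * e" if e: "e > 0" for e
  proof -
    have "continuous_on U \<psi>\<^sub>u\<^sub>v" "continuous_on U \<psi>\<^sub>v\<^sub>u"
      unfolding \<psi>\<^sub>u\<^sub>v_def \<psi>\<^sub>v\<^sub>u_def by (intro smooth_on_imp_continuous_on smooth_on_ddir sm)+
    then have "isCont \<psi>\<^sub>u\<^sub>v p" "isCont \<psi>\<^sub>v\<^sub>u p"
      using U p by (simp_all add: continuous_on_eq_continuous_at)
    then obtain d\<^sub>1 d\<^sub>2
      where d\<^sub>1: "d\<^sub>1 > 0" "\<And>z. dist z p < d\<^sub>1 \<Longrightarrow> dist (\<psi>\<^sub>u\<^sub>v z) (\<psi>\<^sub>u\<^sub>v p) < e"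
        and d\<^sub>2: "d\<^sub>2 > 0" "\<And>z. dist z p < d\<^sub>2 \<Longrightarrow> dist (\<psi>\<^sub>v\<^sub>u z) (\<psi>\<^sub>v\<^sub>u p) < e"
      unfolding continuous_at_eps_delta using e by metis
    obtain d\<^sub>3 where d\<^sub>3: "d\<^sub>3 > 0" "ball p d\<^sub>3 \<subseteq> U" using U p open_contains_ball by blast
    define d where "d = min d\<^sub>1 (min d\<^sub>2 d\<^sub>3)"
    have d: "d > 0" "d \<le> d\<^sub>1" "d \<le> d\<^sub>2" "d \<le> d\<^sub>3" using d\<^sub>1 d\<^sub>2 d\<^sub>3 by (simp_all add: d_def)
    define N where "N = norm u + norm v + 1"
    have N: "0 < N" unfolding N_def using norm_ge_zero[of u] norm_ge_zero[of v] by linarith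
    define h where "h = d / N / 2"
    have h: "0 < h" using d N by (simp add: h_def)
    have near: "dist (p + a *\<^sub>R u + b *\<^sub>R v) p < d" if "0 \<le> a" "a \<le> h" "0 \<le> b" "b \<le> h" for a b
    proof -
      have "dist (p + a *\<^sub>R u + b *\<^sub>R v) p \<le> a * norm u + b * norm v"
        using norm_triangle_ineq[of "a *\<^sub>R u" "b *\<^sub>R v"] that by (simp add: dist_norm)
      also have "\<dots> \<le> h * N"
        using that by (simp add: N_def distrib_left add_mono mult_right_mono add_increasing2)
      also have "\<dots> = d / 2" using N by (simp add: h_def)
      also have "\<dots> < d" using d by simp
      finally show ?thesis .
    qed
    have box: "p + a *\<^sub>R u + b *\<^sub>R v \<in> U \<and> norm (\<psi>\<^sub>u\<^sub>v (p + a *\<^sub>R u + b *\<^sub>R v) - \<psi>\<^sub>u\<^sub>v p) \<le> e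
        \<and> norm (\<psi>\<^sub>v\<^sub>u (p + a *\<^sub>R u + b *\<^sub>R v) - \<psi>\<^sub>v\<^sub>u p) \<le> e"
      if "0 \<le> a" "a \<le> h" "0 \<le> b" "b \<le> h" for a b
    proof -
      define z where "z = p + a *\<^sub>R u + b *\<^sub>R v"
      have "dist z p < d" using near[OF that] by (simp add: z_def)
      then have "dist z p < d\<^sub>1" "dist z p < d\<^sub>2" "z \<in> ball p d\<^sub>3"
        using d by (simp_all add: dist_commute)
      then have "z \<in> U" "norm (\<psi>\<^sub>u\<^sub>v z - \<psi>\<^sub>u\<^sub>v p) \<le> e" "norm (\<psi>\<^sub>v\<^sub>u z - \<psi>\<^sub>v\<^sub>u p) \<le> e"
        using d\<^sub>1(2)[of z] d\<^sub>2(2)[of z] d\<^sub>3(2) by (auto simp: dist_norm)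
      then show ?thesis by (simp add: z_def)
    qed
    define \<Delta> where "\<Delta> = f (p + h *\<^sub>R u + h *\<^sub>R v) - f (p + h *\<^sub>R u) - f (p + h *\<^sub>R v) + f p"
    have "norm (\<Delta> - (h * h) *\<^sub>R \<psi>\<^sub>u\<^sub>v p) \<le> h * h * e"
      unfolding \<Delta>_def \<psi>\<^sub>u\<^sub>v_def
    proof (rule smooth_on_second_difference[OF sm h])
      fix a b assume "0 \<le> a" "a \<le> h" "0 \<le> b" "b \<le> h"
      from box[OF this] show "p + a *\<^sub>R u + b *\<^sub>R v \<in> U \<and>
          norm (ddir v (ddir u f) (p + a *\<^sub>R u + b *\<^sub>R v) - ddir v (ddir u f) p) \<le> e"
        unfolding \<psi>\<^sub>u\<^sub>v_def by blast
    qed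
    moreover have "norm (\<Delta> - (h * h) *\<^sub>R \<psi>\<^sub>v\<^sub>u p) \<le> h * h * e"
    proof -
      have "\<Delta> = f (p + h *\<^sub>R v + h *\<^sub>R u) - f (p + h *\<^sub>R v) - f (p + h *\<^sub>R u) + f p"
        by (simp add: \<Delta>_def algebra_simps)
      also have "norm (\<dots> - (h * h) *\<^sub>R \<psi>\<^sub>v\<^sub>u p) \<le> h * h * e"
        unfolding \<psi>\<^sub>v\<^sub>u_def
      proof (rule smooth_on_second_difference[OF sm h])
        fix a b assume "0 \<le> a" "a \<le> h" "0 \<le> b" "b \<le> h"
        then show "p + a *\<^sub>R v + b *\<^sub>R u \<in> U \<and>
            norm (ddir u (ddir v f) (p + a *\<^sub>R v + b *\<^sub>R u) - ddir u (ddir v f) p) \<le> e"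
          using box[of b a] unfolding \<psi>\<^sub>v\<^sub>u_def by (simp add: add_ac)
      qed
      finally show ?thesis .
    qed
    ultimately have "norm ((h * h) *\<^sub>R (\<psi>\<^sub>v\<^sub>u p - \<psi>\<^sub>u\<^sub>v p)) \<le> (h * h) * (2 * e)"
      using norm_triangle_ineq4[of "\<Delta> - (h * h) *\<^sub>R \<psi>\<^sub>u\<^sub>v p" "\<Delta> - (h * h) *\<^sub>R \<psi>\<^sub>v\<^sub>u p"]
      by (simp add: algebra_simps)
    then show ?thesis using h by (simp add: mult_le_cancel_left_pos)
  qed
  from this[of "norm (\<psi>\<^sub>v\<^sub>u p - \<psi>\<^sub>u\<^sub>v p) / 4"] show ?thesis
    unfolding \<psi>\<^sub>u\<^sub>v_def \<psi>\<^sub>v\<^sub>u_def by (cases "ddir u (ddir v f) p = ddir v (ddir u f) p") auto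
qed

section \<open>Coordinate form of the operators\<close>

text \<open>\<open>cross_axis k\<close> crosses every column with the \<open>k\<close>-th unit vector, so that
  \<open>curl G = (\<Sum>k. cross_axis k (\<partial>\<^sub>k G))\<close>.\<close>

definition cross_axis :: "3 \<Rightarrow> mat3 \<Rightarrow> mat3" where
  "cross_axis k M = (\<chi> i j. \<Sum>l\<in>UNIV. levi i k l * M $ l $ j)"

lemma pd_eq_ddir: "pd k = ddir (axis k 1)"
  by (intro ext) (simp add: pd_def ddir_def)

lemma curlM_eq_sum: "curlM G y = (\<Sum>k\<in>UNIV. cross_axis k (pd k G y))"
  by (simp add: curlM_def cross_axis_def vec_eq_iff sum_component)

lemma divM_eq_sum: "divM G y = (\<Sum>j\<in>UNIV. pd j G y $ j)"
  by (simp add: divM_def vec_eq_iff sum_component)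

lemma gradv_eq_rows: "gradv v y = (\<chi> i. pd i v y)"
  by (simp add: gradv_def vec_eq_iff)

lemma bounded_linear_cross_axis: "bounded_linear (cross_axis k)"
  unfolding linear_conv_bounded_linear[symmetric]
  by (rule linearI) (simp_all add: cross_axis_def vec_eq_iff sum.distrib algebra_simps sum_distrib_left)

lemma bounded_linear_Smat: "bounded_linear Smat"
  unfolding linear_conv_bounded_linear[symmetric]
  by (rule linearI) (simp_all add: Smat_def vec_eq_iff trace_def transpose_def mat_def sum.distrib
      algebra_simps sum_distrib_left)

lemma bounded_linear_symm: "bounded_linear symm"
  unfolding linear_conv_bounded_linear[symmetric]
  by (rule linearI) (simp_all add: symm_def vec_eq_iff transpose_def algebra_simps)

lemma bounded_linear_transpose: "bounded_linear (transpose :: mat3 \<Rightarrow> mat3)"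
  unfolding linear_conv_bounded_linear[symmetric]
  by (rule linearI) (simp_all add: vec_eq_iff transpose_def)

lemma bounded_linear_trace: "bounded_linear (trace :: mat3 \<Rightarrow> real)"
  unfolding linear_conv_bounded_linear[symmetric]
  by (rule linearI) (simp_all add: trace_def sum.distrib sum_distrib_left)

lemma bounded_linear_vskw: "bounded_linear vskw"
  unfolding linear_conv_bounded_linear[symmetric]
  by (rule linearI) (simp_all add: vskw_def vec_eq_iff sum.distrib algebra_simps sum_distrib_left)

lemmas has_ddir_intros = has_ddir_add has_ddir_diff has_ddir_scaleR has_ddir_uminus has_ddir_sum
  has_ddir_const has_ddir_vec_nth has_ddir_vec_lambda
  has_ddir_bounded_linear[OF bounded_linear_mult_right]
  has_ddir_bounded_linear[OF bounded_linear_cross_axis]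
  has_ddir_bounded_linear[OF bounded_linear_Smat]
  has_ddir_bounded_linear[OF bounded_linear_symm]
  has_ddir_bounded_linear[OF bounded_linear_transpose]
  has_ddir_bounded_linear[OF bounded_linear_trace]
  has_ddir_bounded_linear[OF bounded_linear_vskw]

section \<open>Pointwise identities\<close>

lemma levi_simps [simp]:
  "levi 1 1 1 = 0" "levi 1 1 2 = 0" "levi 1 1 3 = 0" "levi 1 2 1 = 0" "levi 1 2 2 = 0"
  "levi 1 2 3 = 1" "levi 1 3 1 = 0" "levi 1 3 2 = -1" "levi 1 3 3 = 0"
  "levi 2 1 1 = 0" "levi 2 1 2 = 0" "levi 2 1 3 = -1" "levi 2 2 1 = 0" "levi 2 2 2 = 0"
  "levi 2 2 3 = 0" "levi 2 3 1 = 1" "levi 2 3 2 = 0" "levi 2 3 3 = 0"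
  "levi 3 1 1 = 0" "levi 3 1 2 = 1" "levi 3 1 3 = 0" "levi 3 2 1 = -1" "levi 3 2 2 = 0"
  "levi 3 2 3 = 0" "levi 3 3 1 = 0" "levi 3 3 2 = 0" "levi 3 3 3 = 0"
  by (simp_all add: levi_def)

lemma transpose_nth: "transpose M $ i $ j = M $ j $ i"
  by (simp add: transpose_def)

lemmas coordinate_simps = cross_axis_def Smat_def symm_def trace_def vskw_def
  transpose_def mat_def sum_3 vec_eq_iff forall_3

lemma Smat_inverse: "Smat G = X \<Longrightarrow> G = transpose X - (trace X / 2) *\<^sub>R mat 1"
  unfolding Smat_def by (auto simp: coordinate_simps field_simps)

text \<open>In the identities below, \<open>H k l\<close>, \<open>N k l\<close> and \<open>T k l m\<close> stand for
  \<open>\<partial>\<^sub>k\<partial>\<^sub>l\<gamma>\<close>, \<open>\<partial>\<^sub>k\<partial>\<^sub>l A\<close> and \<open>\<partial>\<^sub>k\<partial>\<^sub>l\<partial>\<^sub>m\<gamma>\<close>, and \<open>G\<close> for \<open>\<gamma>\<^sub>t\<^sub>t\<close>.\<close>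

lemma york_evolution_algebra:
  fixes H :: "3 \<Rightarrow> 3 \<Rightarrow> mat3" and G :: mat3
  assumes H_swap: "\<And>k l. H k l = H l k" and H_sym: "\<And>k l. transpose (H k l) = H k l"
    and divdiv: "(\<Sum>j\<in>UNIV. (\<Sum>m\<in>UNIV. Smat (H j m) $ m) $ j) = 0"
    and S_G: "Smat G = - symm (\<Sum>k\<in>UNIV. cross_axis k (\<Sum>l\<in>UNIV. cross_axis l (Smat (H k l))))"
  shows "G + Smat (\<Sum>k\<in>UNIV. cross_axis k (transpose (\<Sum>l\<in>UNIV. cross_axis l (H k l))))
     - 2 *\<^sub>R (\<chi> i j. (1/2) * trace (H i j))
     - 2 *\<^sub>R symm (\<chi> i. (1/2) *\<^sub>R (\<Sum>j\<in>UNIV. Smat (H i j) $ j)) = 0"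
proof -
  have entry: "H k l $ i $ j = H k l $ j $ i" for k l i j
    using H_sym[of k l] by (metis transpose_nth)
  have swap: "H 2 1 = H 1 2" "H 3 1 = H 1 3" "H 3 2 = H 2 3"
    by (simp_all add: H_swap)
  have entry_swap: "H k l $ 2 $ 1 = H k l $ 1 $ 2" "H k l $ 3 $ 1 = H k l $ 1 $ 3"
    "H k l $ 3 $ 2 = H k l $ 2 $ 3" for k l
    by (rule entry)+
  show ?thesis using divdiv unfolding Smat_inverse[OF S_G]
    by (simp add: coordinate_simps swap entry_swap algebra_simps) (simp add: field_simps)
qed

lemma div_sym_curl_eq_div_S_def_vskw:
  fixes N :: "3 \<Rightarrow> 3 \<Rightarrow> mat3"
  assumes N_swap: "\<And>k l. N k l = N l k" and div_free: "\<And>k. (\<Sum>j\<in>UNIV. N k j $ j) = 0"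
  shows "(\<Sum>k\<in>UNIV. symm (\<Sum>l\<in>UNIV. cross_axis l (N k l)) $ k)
       = (\<Sum>k\<in>UNIV. Smat (2 *\<^sub>R symm (\<chi> i. vskw (N k i))) $ k)"
proof -
  have swap: "N 2 1 = N 1 2" "N 3 1 = N 1 3" "N 3 2 = N 2 3" by (simp_all add: N_swap)
  have "(\<Sum>j\<in>UNIV. N k j $ j) $ i = 0" for k i using div_free by simp
  from this[of 1 1] this[of 1 2] this[of 1 3] this[of 2 1] this[of 2 2] this[of 2 3]
    this[of 3 1] this[of 3 2] this[of 3 3]
  show ?thesis by (simp add: coordinate_simps swap field_simps)
qed

lemma div_sym_curl_curl_eq_div_S_def_div:
  fixes T :: "3 \<Rightarrow> 3 \<Rightarrow> 3 \<Rightarrow> mat3"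
  assumes T_swap12: "\<And>k l m. T k l m = T l k m" and T_swap23: "\<And>k l m. T k l m = T k m l"
    and T_sym: "\<And>k l m. transpose (T k l m) = T k l m"
    and divdiv: "\<And>k. (\<Sum>j\<in>UNIV. (\<Sum>m\<in>UNIV. Smat (T k j m) $ m) $ j) = 0"
  shows "(\<Sum>k\<in>UNIV. symm (\<Sum>l\<in>UNIV. cross_axis l (- (\<Sum>m\<in>UNIV. cross_axis m (Smat (T k l m))))) $ k)
       = (\<Sum>k\<in>UNIV. Smat (symm (\<chi> i. \<Sum>j\<in>UNIV. Smat (T k i j) $ j)) $ k)"
proof -
  have swap: "T 1 2 1 = T 1 1 2" "T 1 3 1 = T 1 1 3" "T 1 3 2 = T 1 2 3" "T 2 1 1 = T 1 1 2"
    "T 2 1 2 = T 1 2 2" "T 2 1 3 = T 1 2 3" "T 2 2 1 = T 1 2 2" "T 2 3 1 = T 1 2 3"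
    "T 2 3 2 = T 2 2 3" "T 3 1 1 = T 1 1 3" "T 3 1 2 = T 1 2 3" "T 3 1 3 = T 1 3 3"
    "T 3 2 1 = T 1 2 3" "T 3 2 2 = T 2 2 3" "T 3 2 3 = T 2 3 3" "T 3 3 1 = T 1 3 3"
    "T 3 3 2 = T 2 3 3"
    by (metis T_swap12 T_swap23)+
  have entry: "T k l m $ i $ j = T k l m $ j $ i" for k l m i j
    using T_sym[of k l m] by (metis transpose_nth)
  have "(\<Sum>j\<in>UNIV. (\<Sum>m\<in>UNIV. Smat (T k j m) $ m) $ j) = 0" for k using divdiv .
  from this[of 1] this[of 2] this[of 3] show ?thesis
    by (simp add: coordinate_simps swap entry[of _ _ _ 2 1] entry[of _ _ _ 3 1]
        entry[of _ _ _ 3 2] field_simps)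
qed

lemma div_S_gauge_split:
  fixes G :: "3 \<Rightarrow> mat3" and I V :: "3 \<Rightarrow> 3 \<Rightarrow> vec3"
  shows "(\<Sum>k\<in>UNIV. Smat (G k - 2 *\<^sub>R symm (\<chi> i. (1/2) *\<^sub>R I k i + V k i)) $ k)
    = (\<Sum>k\<in>UNIV. Smat (G k) $ k) - (\<Sum>k\<in>UNIV. Smat (symm (\<chi> i. I k i)) $ k)
      - (\<Sum>k\<in>UNIV. Smat (2 *\<^sub>R symm (\<chi> i. V k i)) $ k)"
  by (simp add: coordinate_simps field_simps)

definition e\<^sub>t :: "real \<times> vec3" where "e\<^sub>t = (1, 0)"

definition e\<^sub>x :: "3 \<Rightarrow> real \<times> vec3" where "e\<^sub>x k = (0, axis k 1)"

lemma pd_slice: "pd k (\<lambda>y. F (t, y)) y = ddir (e\<^sub>x k) F (t, y)"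
  by (simp add: pd_eq_ddir ddir_def e\<^sub>x_def)

lemma has_ddir_slice: "has_ddir (e\<^sub>x k) F (t, y) D \<Longrightarrow> has_ddir (axis k 1) (\<lambda>y. F (t, y)) y D"
  by (simp add: has_ddir_def e\<^sub>x_def)

lemma has_ddir_time_imp_has_vector_derivative:
  "has_ddir e\<^sub>t F (t, y) D \<Longrightarrow> ((\<lambda>s. F (s, y)) has_vector_derivative D) (at t)"
  using has_ddir_imp_has_vector_derivative[of e\<^sub>t F "(0, y)" t D] by (simp add: e\<^sub>t_def)

section \<open>The first-order system\<close>

locale first_order_system =
  fixes \<Omega> :: "vec3 set" and T a b :: real and A \<gamma> :: "real \<Rightarrow> vec3 \<Rightarrow> mat3"
  assumes open_\<Omega>: "open \<Omega>" and T_pos: "T > 0" and a_neg: "a < 0" and T_less_b: "T < b"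
    and smooth_A: "smooth_on ({a<..<b} \<times> \<Omega>) (\<lambda>(t, x). A t x)"
    and smooth_\<gamma>: "smooth_on ({a<..<b} \<times> \<Omega>) (\<lambda>(t, x). \<gamma> t x)"
    and \<gamma>_sym: "\<And>t x. t \<in> {0..T} \<Longrightarrow> x \<in> \<Omega> \<Longrightarrow> symmetric_mat (\<gamma> t x)"
    and div_A: "\<And>t x. t \<in> {0..T} \<Longrightarrow> x \<in> \<Omega> \<Longrightarrow> divM (A t) x = 0"
    and A_evol: "\<And>t x. t \<in> {0..T} \<Longrightarrow> x \<in> \<Omega> \<Longrightarrow>
                dt T A t x + curlM (\<lambda>y. Smat (\<gamma> t y)) x = 0"
    and \<gamma>_evol: "\<And>t x. t \<in> {0..T} \<Longrightarrow> x \<in> \<Omega> \<Longrightarrow>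
                Smat (dt T \<gamma> t x) - symm (curlM (A t) x) = 0"
    and divdiv_S\<gamma>: "\<And>t x. t \<in> {0..T} \<Longrightarrow> x \<in> \<Omega> \<Longrightarrow> divdiv (\<lambda>y. Smat (\<gamma> t y)) x = 0"
begin

definition U :: "(real \<times> vec3) set" where "U = {a<..<b} \<times> \<Omega>"
definition \<Gamma> :: "real \<times> vec3 \<Rightarrow> mat3" where "\<Gamma> = (\<lambda>(t, x). \<gamma> t x)"
definition \<A> :: "real \<times> vec3 \<Rightarrow> mat3" where "\<A> = (\<lambda>(t, x). A t x)"

lemma open_U: "open U"
  unfolding U_def using open_\<Omega> by (simp add: open_Times)

lemma mem_U: "t \<in> {0..T} \<Longrightarrow> y \<in> \<Omega> \<Longrightarrow> (t, y) \<in> U"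
  unfolding U_def using a_neg T_less_b by auto

lemma smooth_\<Gamma>: "smooth_on U \<Gamma>"
  using smooth_\<gamma> by (simp add: U_def \<Gamma>_def)

lemma smooth_\<A>: "smooth_on U \<A>"
  using smooth_A by (simp add: U_def \<A>_def)

lemmas has_ddir_\<Gamma> = smooth_on_has_ddir[OF smooth_\<Gamma>]
  smooth_on_has_ddir[OF smooth_on_ddir[OF smooth_\<Gamma>]]
  smooth_on_has_ddir[OF smooth_on_ddir[OF smooth_on_ddir[OF smooth_\<Gamma>]]]

lemmas has_ddir_\<A> = smooth_on_has_ddir[OF smooth_\<A>]
  smooth_on_has_ddir[OF smooth_on_ddir[OF smooth_\<A>]]
  smooth_on_has_ddir[OF smooth_on_ddir[OF smooth_on_ddir[OF smooth_\<A>]]]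

lemma ddir_commute:
  "smooth_on U (F :: real \<times> vec3 \<Rightarrow> 'a::real_inner) \<Longrightarrow> q \<in> U \<Longrightarrow>
    ddir u (ddir v F) q = ddir v (ddir u F) q"
  by (rule smooth_on_ddir_commute[OF open_U])

lemma ddir_commute_inner:
  "smooth_on U (F :: real \<times> vec3 \<Rightarrow> 'a::real_inner) \<Longrightarrow> q \<in> U \<Longrightarrow>
    ddir w (ddir u (ddir v F)) q = ddir w (ddir v (ddir u F)) q"
  by (rule ddir_cong_open[OF open_U]) (auto intro: ddir_commute)

lemma ddir_commute_outer:
  fixes F :: "real \<times> vec3 \<Rightarrow> 'a::real_inner"
  assumes "smooth_on U F" "q \<in> U"
  shows "ddir w (ddir u (ddir v F)) q = ddir u (ddir v (ddir w F)) q"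
proof -
  have "ddir w (ddir u (ddir v F)) q = ddir u (ddir w (ddir v F)) q"
    by (rule ddir_commute[OF smooth_on_ddir[OF assms(1)] assms(2)])
  also have "\<dots> = ddir u (ddir v (ddir w F)) q"
    by (rule ddir_cong_open[OF open_U assms(2)]) (rule ddir_commute[OF assms(1)])
  finally show ?thesis .
qed

lemma has_ddir_space_unique:
  assumes "x \<in> \<Omega>" "\<And>y. y \<in> \<Omega> \<Longrightarrow> f (t, y) = g (t, y)"
    and "has_ddir (e\<^sub>x k) f (t, x) D" "has_ddir (e\<^sub>x k) g (t, x) E"
  shows "D = E"
proof -
  have "has_ddir (axis k 1) (\<lambda>y. g (t, y)) x D"
    by (rule has_ddir_transform_open[OF open_\<Omega> assms(1) _ has_ddir_slice[OF assms(3)]])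
      (use assms(2) in auto)
  then show ?thesis using has_ddir_slice[OF assms(4)] by (rule has_ddir_unique)
qed

lemma pd_eq_space_ddir:
  assumes "x \<in> \<Omega>" "\<And>y. y \<in> \<Omega> \<Longrightarrow> \<Phi> y = \<Psi> (t, y)" "has_ddir (e\<^sub>x k) \<Psi> (t, x) D"
  shows "pd k \<Phi> x = D"
proof -
  have "has_ddir (axis k 1) \<Phi> x D"
    by (rule has_ddir_transform_open[OF open_\<Omega> assms(1) _ has_ddir_slice[OF assms(3)]])
      (use assms(2) in auto)
  then show ?thesis by (simp add: pd_eq_ddir has_ddir_imp_ddir_eq)
qed

lemma has_ddir_time_unique:
  assumes "t \<in> {0..T}" "\<And>s. s \<in> {0..T} \<Longrightarrow> f (s, y) = g (s, y)"
    and "has_ddir e\<^sub>t f (t, y) D" "has_ddir e\<^sub>t g (t, y) E"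
  shows "D = E"
proof -
  have f: "((\<lambda>s. f (s, y)) has_vector_derivative D) (at t within {0..T})"
    and g: "((\<lambda>s. g (s, y)) has_vector_derivative E) (at t within {0..T})"
    using has_ddir_time_imp_has_vector_derivative[OF assms(3)]
      has_ddir_time_imp_has_vector_derivative[OF assms(4)]
    by (auto intro: has_vector_derivative_at_within)
  have "((\<lambda>s. f (s, y)) has_vector_derivative E) (at t within {0..T})"
    by (rule has_vector_derivative_transform[OF _ _ g]) (use assms in auto)
  with f show ?thesis
    using vector_derivative_unique_within_closed_interval[OF T_pos] assms(1) by auto
qed

lemma dt_eq_ddir_time:
  assumes "smooth_on U F" "t \<in> {0..T}" "y \<in> \<Omega>"
  shows "dt T (\<lambda>s y. F (s, y)) t y = ddir e\<^sub>t F (t, y)"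
proof -
  have "((\<lambda>s. F (s, y)) has_vector_derivative ddir e\<^sub>t F (t, y)) (at t within {0..T})"
    using has_ddir_time_imp_has_vector_derivative[OF smooth_on_has_ddir[OF assms(1) mem_U[OF assms(2,3)]]]
    by (rule has_vector_derivative_at_within)
  then show ?thesis unfolding dt_def
    using vector_derivative_within_cbox[of 0 T t] T_pos assms(2) by simp
qed

lemma transpose_space_ddirs_\<Gamma>:
  assumes "t \<in> {0..T}" "y \<in> \<Omega>"
  shows "transpose (iterdd (map e\<^sub>x ks) \<Gamma> (t, y)) = iterdd (map e\<^sub>x ks) \<Gamma> (t, y)"
  using assms(2)
proof (induction ks arbitrary: y)
  case Nil
  then show ?case using \<gamma>_sym[OF assms(1)] by (simp add: symmetric_mat_def \<Gamma>_def)
next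
  case (Cons k ks)
  let ?F = "iterdd (map e\<^sub>x ks) \<Gamma>"
  have sm: "smooth_on U ?F" by (rule smooth_on_iterdd[OF smooth_\<Gamma>])
  show ?case
  proof (simp, rule has_ddir_space_unique[OF Cons.prems, of "\<lambda>q. transpose (?F q)" t ?F])
    show "has_ddir (e\<^sub>x k) (\<lambda>q. transpose (?F q)) (t, y) (transpose (ddir (e\<^sub>x k) ?F (t, y)))"
      by (intro has_ddir_intros smooth_on_has_ddir[OF sm] mem_U assms(1) Cons.prems)
    show "has_ddir (e\<^sub>x k) ?F (t, y) (ddir (e\<^sub>x k) ?F (t, y))"
      by (intro smooth_on_has_ddir[OF sm] mem_U assms(1) Cons.prems)
  qed (use Cons.IH in auto)
qed

lemma pd_\<gamma>: "pd k (\<gamma> t) y = ddir (e\<^sub>x k) \<Gamma> (t, y)"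
  using pd_slice[of k \<Gamma> t y] by (simp add: \<Gamma>_def)

lemma pd_A: "pd k (A t) y = ddir (e\<^sub>x k) \<A> (t, y)"
  using pd_slice[of k \<A> t y] by (simp add: \<A>_def)

lemma pd_S\<gamma>:
  assumes "(t, y) \<in> U"
  shows "pd k (\<lambda>y. Smat (\<gamma> t y)) y = Smat (ddir (e\<^sub>x k) \<Gamma> (t, y))"
proof -
  have "has_ddir (e\<^sub>x k) (\<lambda>q. Smat (\<Gamma> q)) (t, y) (Smat (ddir (e\<^sub>x k) \<Gamma> (t, y)))"
    by (intro has_ddir_intros has_ddir_\<Gamma> assms)
  then show ?thesis
    using pd_slice[of k "\<lambda>q. Smat (\<Gamma> q)" t y] by (simp add: \<Gamma>_def has_ddir_imp_ddir_eq)
qed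

lemma dt_\<gamma>: "t \<in> {0..T} \<Longrightarrow> y \<in> \<Omega> \<Longrightarrow> dt T \<gamma> t y = ddir e\<^sub>t \<Gamma> (t, y)"
  using dt_eq_ddir_time[OF smooth_\<Gamma>] by (simp add: \<Gamma>_def)

lemma dt_A: "t \<in> {0..T} \<Longrightarrow> y \<in> \<Omega> \<Longrightarrow> dt T A t y = ddir e\<^sub>t \<A> (t, y)"
  using dt_eq_ddir_time[OF smooth_\<A>] by (simp add: \<A>_def)

definition div_S\<Gamma> :: "real \<times> vec3 \<Rightarrow> vec3" where
  "div_S\<Gamma> q = (\<Sum>j\<in>UNIV. Smat (ddir (e\<^sub>x j) \<Gamma> q) $ j)"

definition div_S\<Gamma>' :: "3 \<Rightarrow> real \<times> vec3 \<Rightarrow> vec3" where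
  "div_S\<Gamma>' i q = (\<Sum>j\<in>UNIV. Smat (ddir (e\<^sub>x i) (ddir (e\<^sub>x j) \<Gamma>) q) $ j)"

definition div_S\<Gamma>'' :: "3 \<Rightarrow> 3 \<Rightarrow> real \<times> vec3 \<Rightarrow> vec3" where
  "div_S\<Gamma>'' k i q = (\<Sum>j\<in>UNIV. Smat (ddir (e\<^sub>x k) (ddir (e\<^sub>x i) (ddir (e\<^sub>x j) \<Gamma>)) q) $ j)"

lemma divM_S\<gamma>: "(t, y) \<in> U \<Longrightarrow> divM (\<lambda>y. Smat (\<gamma> t y)) y = div_S\<Gamma> (t, y)"
  by (simp add: divM_eq_sum pd_S\<gamma> div_S\<Gamma>_def)

lemma has_ddir_div_S\<Gamma>: "q \<in> U \<Longrightarrow> has_ddir (e\<^sub>x i) div_S\<Gamma> q (div_S\<Gamma>' i q)"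
  unfolding div_S\<Gamma>_def[abs_def] div_S\<Gamma>'_def by (intro has_ddir_intros has_ddir_\<Gamma>)

lemma has_ddir_div_S\<Gamma>': "q \<in> U \<Longrightarrow> has_ddir (e\<^sub>x k) (div_S\<Gamma>' i) q (div_S\<Gamma>'' k i q)"
  unfolding div_S\<Gamma>'_def[abs_def] div_S\<Gamma>''_def by (intro has_ddir_intros has_ddir_\<Gamma>)

lemma continuous_on_div_S\<Gamma>: "continuous_on U div_S\<Gamma>"
  and continuous_on_div_S\<Gamma>': "continuous_on U (div_S\<Gamma>' i)"
  and continuous_on_div_S\<Gamma>'': "continuous_on U (div_S\<Gamma>'' k i)"
  unfolding div_S\<Gamma>_def[abs_def] div_S\<Gamma>'_def[abs_def] div_S\<Gamma>''_def[abs_def]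
  by (intro continuous_on_sum bounded_linear.continuous_on[OF bounded_linear_vec_nth]
      bounded_linear.continuous_on[OF bounded_linear_Smat] smooth_on_imp_continuous_on
      smooth_on_ddir smooth_\<Gamma>)+

lemma div_A_coords: "t \<in> {0..T} \<Longrightarrow> y \<in> \<Omega> \<Longrightarrow> (\<Sum>j\<in>UNIV. ddir (e\<^sub>x j) \<A> (t, y) $ j) = 0"
  using div_A[of t y] by (simp only: divM_eq_sum pd_A)

lemma A_evol_coords:
  assumes "t \<in> {0..T}" "y \<in> \<Omega>"
  shows "ddir e\<^sub>t \<A> (t, y) = - (\<Sum>l\<in>UNIV. cross_axis l (Smat (ddir (e\<^sub>x l) \<Gamma> (t, y))))"
  using A_evol[OF assms]
  by (simp add: dt_A[OF assms] curlM_eq_sum pd_S\<gamma> mem_U[OF assms] eq_neg_iff_add_eq_0)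

lemma \<gamma>_evol_coords:
  assumes "t \<in> {0..T}" "y \<in> \<Omega>"
  shows "Smat (ddir e\<^sub>t \<Gamma> (t, y)) = symm (\<Sum>l\<in>UNIV. cross_axis l (ddir (e\<^sub>x l) \<A> (t, y)))"
  using \<gamma>_evol[OF assms] by (simp add: dt_\<gamma>[OF assms] curlM_eq_sum pd_A)

lemma divdiv_coords:
  assumes "t \<in> {0..T}" "y \<in> \<Omega>"
  shows "(\<Sum>j\<in>UNIV. (\<Sum>m\<in>UNIV. Smat (ddir (e\<^sub>x j) (ddir (e\<^sub>x m) \<Gamma>) (t, y)) $ m) $ j) = 0"
proof -
  have "pd j (divM (\<lambda>y. Smat (\<gamma> t y))) y = (\<Sum>m\<in>UNIV. Smat (ddir (e\<^sub>x j) (ddir (e\<^sub>x m) \<Gamma>) (t, y)) $ m)"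
    for j
  proof (rule pd_eq_space_ddir[OF assms(2)])
    show "divM (\<lambda>y. Smat (\<gamma> t y)) y' = div_S\<Gamma> (t, y')" if "y' \<in> \<Omega>" for y'
      using divM_S\<gamma> mem_U[OF assms(1) that] by blast
    show "has_ddir (e\<^sub>x j) div_S\<Gamma> (t, y) (\<Sum>m\<in>UNIV. Smat (ddir (e\<^sub>x j) (ddir (e\<^sub>x m) \<Gamma>) (t, y)) $ m)"
      using has_ddir_div_S\<Gamma>[OF mem_U[OF assms]] by (simp add: div_S\<Gamma>'_def)
  qed
  then show ?thesis using divdiv_S\<gamma>[OF assms] by (simp add: divdiv_def divv_def)
qed

lemma space_ddir_A_t:
  assumes "t \<in> {0..T}" "y \<in> \<Omega>"
  shows "ddir (e\<^sub>x k) (ddir e\<^sub>t \<A>) (t, y)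
    = - (\<Sum>l\<in>UNIV. cross_axis l (Smat (ddir (e\<^sub>x k) (ddir (e\<^sub>x l) \<Gamma>) (t, y))))"
proof (rule has_ddir_space_unique[OF assms(2)])
  show "ddir e\<^sub>t \<A> (t, y') = - (\<Sum>l\<in>UNIV. cross_axis l (Smat (ddir (e\<^sub>x l) \<Gamma> (t, y'))))"
    if "y' \<in> \<Omega>" for y'
    using A_evol_coords[OF assms(1) that] .
  show "has_ddir (e\<^sub>x k) (ddir e\<^sub>t \<A>) (t, y) (ddir (e\<^sub>x k) (ddir e\<^sub>t \<A>) (t, y))"
    by (intro has_ddir_\<A> mem_U assms)
  show "has_ddir (e\<^sub>x k) (\<lambda>q. - (\<Sum>l\<in>UNIV. cross_axis l (Smat (ddir (e\<^sub>x l) \<Gamma> q)))) (t, y)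
      (- (\<Sum>l\<in>UNIV. cross_axis l (Smat (ddir (e\<^sub>x k) (ddir (e\<^sub>x l) \<Gamma>) (t, y)))))"
    by (intro has_ddir_intros has_ddir_\<Gamma> mem_U assms)
qed

lemma mem_U_0: "y \<in> \<Omega> \<Longrightarrow> (0, y) \<in> U"
  using T_pos by (intro mem_U) auto

end

section \<open>The evolution equation\<close>

context first_order_system
begin

lemma transpose_ddir2_\<Gamma>:
  "t \<in> {0..T} \<Longrightarrow> y \<in> \<Omega> \<Longrightarrow>
    transpose (ddir (e\<^sub>x k) (ddir (e\<^sub>x l) \<Gamma>) (t, y)) = ddir (e\<^sub>x k) (ddir (e\<^sub>x l) \<Gamma>) (t, y)"
  using transpose_space_ddirs_\<Gamma>[of t y "[k, l]"] by simp

lemma dt_dt_\<gamma>: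
  assumes t: "t \<in> {0..T}" and x: "x \<in> \<Omega>"
  shows "dt T (dt T \<gamma>) t x = ddir e\<^sub>t (ddir e\<^sub>t \<Gamma>) (t, x)"
proof -
  have "((\<lambda>s. ddir e\<^sub>t \<Gamma> (s, x)) has_vector_derivative ddir e\<^sub>t (ddir e\<^sub>t \<Gamma>) (t, x)) (at t)"
    by (intro has_ddir_time_imp_has_vector_derivative has_ddir_\<Gamma> mem_U t x)
  then have d: "((\<lambda>s. ddir e\<^sub>t \<Gamma> (s, x)) has_vector_derivative ddir e\<^sub>t (ddir e\<^sub>t \<Gamma>) (t, x))
      (at t within {0..T})"
    by (rule has_vector_derivative_at_within)
  have eq: "dt T \<gamma> s x = ddir e\<^sub>t \<Gamma> (s, x)" if "s \<in> {0..T}" for s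
    using dt_\<gamma>[OF that x] .
  have "((\<lambda>s. dt T \<gamma> s x) has_vector_derivative ddir e\<^sub>t (ddir e\<^sub>t \<Gamma>) (t, x)) (at t within {0..T})"
    using has_vector_derivative_transform[OF t eq d] .
  then show ?thesis
    unfolding dt_def[of T "dt T \<gamma>"] using vector_derivative_within_cbox[of 0 T t] T_pos t by simp
qed

lemma S_\<gamma>_tt_coords:
  assumes t: "t \<in> {0..T}" and x: "x \<in> \<Omega>"
  shows "Smat (ddir e\<^sub>t (ddir e\<^sub>t \<Gamma>) (t, x))
    = - symm (\<Sum>k\<in>UNIV. cross_axis k (\<Sum>l\<in>UNIV. cross_axis l (Smat (ddir (e\<^sub>x k) (ddir (e\<^sub>x l) \<Gamma>) (t, x)))))"
proof -
  have "Smat (ddir e\<^sub>t (ddir e\<^sub>t \<Gamma>) (t, x))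
      = symm (\<Sum>k\<in>UNIV. cross_axis k (ddir e\<^sub>t (ddir (e\<^sub>x k) \<A>) (t, x)))"
  proof (rule has_ddir_time_unique[OF t])
    show "Smat (ddir e\<^sub>t \<Gamma> (s, x)) = symm (\<Sum>k\<in>UNIV. cross_axis k (ddir (e\<^sub>x k) \<A> (s, x)))"
      if "s \<in> {0..T}" for s
      using \<gamma>_evol_coords[OF that x] .
    show "has_ddir e\<^sub>t (\<lambda>q. Smat (ddir e\<^sub>t \<Gamma> q)) (t, x) (Smat (ddir e\<^sub>t (ddir e\<^sub>t \<Gamma>) (t, x)))"
      by (intro has_ddir_intros has_ddir_\<Gamma> mem_U t x)
    show "has_ddir e\<^sub>t (\<lambda>q. symm (\<Sum>k\<in>UNIV. cross_axis k (ddir (e\<^sub>x k) \<A> q))) (t, x)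
        (symm (\<Sum>k\<in>UNIV. cross_axis k (ddir e\<^sub>t (ddir (e\<^sub>x k) \<A>) (t, x))))"
      by (intro has_ddir_intros has_ddir_\<A> mem_U t x)
  qed
  also have "\<dots> = symm (\<Sum>k\<in>UNIV. cross_axis k (ddir (e\<^sub>x k) (ddir e\<^sub>t \<A>) (t, x)))"
    by (simp only: ddir_commute[OF smooth_\<A> mem_U[OF t x]])
  also have "\<dots> = - symm (\<Sum>k\<in>UNIV. cross_axis k
      (\<Sum>l\<in>UNIV. cross_axis l (Smat (ddir (e\<^sub>x k) (ddir (e\<^sub>x l) \<Gamma>) (t, x)))))"
    by (simp add: space_ddir_A_t[OF t x] sum_negf
        linear_neg[OF bounded_linear.linear[OF bounded_linear_cross_axis]]
        linear_neg[OF bounded_linear.linear[OF bounded_linear_symm]])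
  finally show ?thesis .
qed

lemma inc_\<gamma>_coords:
  assumes t: "t \<in> {0..T}" and x: "x \<in> \<Omega>"
  shows "inc (\<gamma> t) x
    = (\<Sum>k\<in>UNIV. cross_axis k (transpose (\<Sum>l\<in>UNIV. cross_axis l (ddir (e\<^sub>x k) (ddir (e\<^sub>x l) \<Gamma>) (t, x)))))"
proof -
  have "pd k (\<lambda>y. transpose (curlM (\<gamma> t) y)) x
      = transpose (\<Sum>l\<in>UNIV. cross_axis l (ddir (e\<^sub>x k) (ddir (e\<^sub>x l) \<Gamma>) (t, x)))" for k
  proof (rule pd_eq_space_ddir[OF x])
    show "transpose (curlM (\<gamma> t) y) = transpose (\<Sum>l\<in>UNIV. cross_axis l (ddir (e\<^sub>x l) \<Gamma> (t, y)))"
      for y by (simp add: curlM_eq_sum pd_\<gamma>)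
    show "has_ddir (e\<^sub>x k) (\<lambda>q. transpose (\<Sum>l\<in>UNIV. cross_axis l (ddir (e\<^sub>x l) \<Gamma> q))) (t, x)
        (transpose (\<Sum>l\<in>UNIV. cross_axis l (ddir (e\<^sub>x k) (ddir (e\<^sub>x l) \<Gamma>) (t, x))))"
      by (intro has_ddir_intros has_ddir_\<Gamma> mem_U t x)
  qed
  then show ?thesis by (simp add: inc_def curlM_eq_sum[of "\<lambda>y. transpose (curlM (\<gamma> t) y)"])
qed

end

locale york_gauge = first_order_system +
  fixes A\<^sub>0 :: "vec3 \<Rightarrow> mat3" and \<alpha> :: "real \<Rightarrow> vec3 \<Rightarrow> real" and \<beta> :: "real \<Rightarrow> vec3 \<Rightarrow> vec3"
  assumes A_init: "\<And>x. x \<in> \<Omega> \<Longrightarrow> A 0 x = A\<^sub>0 x"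
    and \<alpha>_eq: "\<And>t x. \<alpha> t x = (1/2) * trace (\<gamma> t x)"
    and \<beta>_eq: "\<And>t x. \<beta> t x = (1/2) *\<^sub>R integral {0..t} (\<lambda>s. divM (\<lambda>y. Smat (\<gamma> s y)) x) + vskw (A\<^sub>0 x)"
begin

lemma hess_\<alpha>_coords:
  assumes t: "t \<in> {0..T}" and x: "x \<in> \<Omega>"
  shows "hess (\<alpha> t) x = (\<chi> i j. (1/2) * trace (ddir (e\<^sub>x i) (ddir (e\<^sub>x j) \<Gamma>) (t, x)))"
proof -
  have pd_\<alpha>: "pd j (\<alpha> t) y = (1/2) * trace (ddir (e\<^sub>x j) \<Gamma> (t, y))" if y: "y \<in> \<Omega>" for j y
  proof (rule pd_eq_space_ddir[OF y])
    show "\<alpha> t y' = (1/2) * trace (\<Gamma> (t, y'))" for y' by (simp add: \<alpha>_eq \<Gamma>_def)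
    show "has_ddir (e\<^sub>x j) (\<lambda>q. (1/2) * trace (\<Gamma> q)) (t, y) ((1/2) * trace (ddir (e\<^sub>x j) \<Gamma> (t, y)))"
      by (intro has_ddir_intros has_ddir_\<Gamma> mem_U t y)
  qed
  have "pd i (\<lambda>y. pd j (\<alpha> t) y) x = (1/2) * trace (ddir (e\<^sub>x i) (ddir (e\<^sub>x j) \<Gamma>) (t, x))" for i j
  proof (rule pd_eq_space_ddir[OF x])
    show "pd j (\<alpha> t) y = (1/2) * trace (ddir (e\<^sub>x j) \<Gamma> (t, y))" if "y \<in> \<Omega>" for y
      using pd_\<alpha>[OF that] .
    show "has_ddir (e\<^sub>x i) (\<lambda>q. (1/2) * trace (ddir (e\<^sub>x j) \<Gamma> q)) (t, x)
        ((1/2) * trace (ddir (e\<^sub>x i) (ddir (e\<^sub>x j) \<Gamma>) (t, x)))"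
      by (intro has_ddir_intros has_ddir_\<Gamma> mem_U t x)
  qed
  then show ?thesis by (simp add: hess_def vec_eq_iff)
qed

lemma dt_\<beta>:
  assumes t: "t \<in> {0..T}" and y: "y \<in> \<Omega>"
  shows "dt T \<beta> t y = (1/2) *\<^sub>R div_S\<Gamma> (t, y)"
proof -
  define \<phi> where "\<phi> s = divM (\<lambda>y. Smat (\<gamma> s y)) y" for s
  have \<phi>_eq: "\<phi> s = div_S\<Gamma> (s, y)" if "s \<in> {0..T}" for s
    using divM_S\<gamma>[OF mem_U[OF that y]] by (simp add: \<phi>_def)
  have "continuous_on {0..T} (\<lambda>s. div_S\<Gamma> (s, y))"
    by (rule continuous_on_compose2[OF continuous_on_div_S\<Gamma>])
      (auto intro!: continuous_intros mem_U y)
  then have "continuous_on {0..T} \<phi>"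
    using \<phi>_eq continuous_on_eq by (metis (no_types, lifting))
  then have "((\<lambda>s. (1/2) *\<^sub>R integral {0..s} \<phi> + vskw (A\<^sub>0 y)) has_vector_derivative (1/2) *\<^sub>R \<phi> t)
      (at t within {0..T})"
    unfolding has_vector_derivative_add_const
    by (intro bounded_linear.has_vector_derivative[OF bounded_linear_scaleR_right]
        integral_has_vector_derivative t)
  then have "((\<lambda>s. \<beta> s y) has_vector_derivative (1/2) *\<^sub>R \<phi> t) (at t within {0..T})"
    by (simp add: \<beta>_eq \<phi>_def[abs_def])
  then show ?thesis
    unfolding dt_def using vector_derivative_within_cbox[of 0 T t] T_pos t \<phi>_eq[OF t] by simp
qed

lemma def_dt_\<beta>_coords:
  assumes t: "t \<in> {0..T}" and x: "x \<in> \<Omega>"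
  shows "defv (dt T \<beta> t) x = symm (\<chi> i. (1/2) *\<^sub>R div_S\<Gamma>' i (t, x))"
proof -
  have "pd i (dt T \<beta> t) x = (1/2) *\<^sub>R div_S\<Gamma>' i (t, x)" for i
  proof (rule pd_eq_space_ddir[OF x])
    show "dt T \<beta> t y = (1/2) *\<^sub>R div_S\<Gamma> (t, y)" if "y \<in> \<Omega>" for y
      using dt_\<beta>[OF t that] .
    show "has_ddir (e\<^sub>x i) (\<lambda>q. (1/2) *\<^sub>R div_S\<Gamma> q) (t, x) ((1/2) *\<^sub>R div_S\<Gamma>' i (t, x))"
      by (intro has_ddir_intros has_ddir_div_S\<Gamma> mem_U t x)
  qed
  then show ?thesis by (simp add: defv_def gradv_eq_rows)
qed

theorem york_evolution:
  assumes t: "t \<in> {0..T}" and x: "x \<in> \<Omega>"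
  shows "dt T (dt T \<gamma>) t x + Smat (inc (\<gamma> t) x) - 2 *\<^sub>R hess (\<alpha> t) x - 2 *\<^sub>R defv (dt T \<beta> t) x = 0"
proof -
  define H where "H k l = ddir (e\<^sub>x k) (ddir (e\<^sub>x l) \<Gamma>) (t, x)" for k l
  have "H k l = H l k" for k l
    unfolding H_def by (rule ddir_commute[OF smooth_\<Gamma> mem_U[OF t x]])
  moreover have "transpose (H k l) = H k l" for k l
    unfolding H_def by (rule transpose_ddir2_\<Gamma>[OF t x])
  moreover have "(\<Sum>j\<in>UNIV. (\<Sum>m\<in>UNIV. Smat (H j m) $ m) $ j) = 0"
    unfolding H_def by (rule divdiv_coords[OF t x])
  moreover have "Smat (ddir e\<^sub>t (ddir e\<^sub>t \<Gamma>) (t, x))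
      = - symm (\<Sum>k\<in>UNIV. cross_axis k (\<Sum>l\<in>UNIV. cross_axis l (Smat (H k l))))"
    unfolding H_def by (rule S_\<gamma>_tt_coords[OF t x])
  ultimately show ?thesis
    unfolding dt_dt_\<gamma>[OF t x] inc_\<gamma>_coords[OF t x] hess_\<alpha>_coords[OF t x] def_dt_\<beta>_coords[OF t x]
      div_S\<Gamma>'_def H_def[symmetric]
    by (rule york_evolution_algebra)
qed

end

section \<open>The momentum constraint\<close>

context first_order_system
begin

lemma has_ddir_space_integral:
  fixes F F' :: "real \<times> vec3 \<Rightarrow> 'c::euclidean_space"
  assumes cont_F: "continuous_on U F" and cont_F': "continuous_on U F'"
    and F': "\<And>q. q \<in> U \<Longrightarrow> has_ddir (e\<^sub>x k) F q (F' q)"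
    and t: "t \<in> {0..T}" and x: "x \<in> \<Omega>"
  shows "has_ddir (axis k 1) (\<lambda>y. integral {0..t} (\<lambda>s. F (s, y))) x (integral {0..t} (\<lambda>s. F' (s, x)))"
proof -
  obtain \<delta> where \<delta>: "\<delta> > 0" "ball x \<delta> \<subseteq> \<Omega>" using open_\<Omega> x open_contains_ball by blast
  define V where "V = ball (0::real) \<delta>"
  have V: "(s, x + h *\<^sub>R axis k 1) \<in> U" if "h \<in> V" "s \<in> cbox 0 t" for h s
  proof -
    have "x + h *\<^sub>R axis k 1 \<in> \<Omega>" using that(1) \<delta>(2) by (auto simp: V_def dist_norm)
    moreover have "s \<in> {0..T}" using that(2) t by auto
    ultimately show ?thesis using mem_U by blast
  qed
  have "((\<lambda>h. F (s, x + h *\<^sub>R axis k 1)) has_vector_derivative F' (s, x + h *\<^sub>R axis k 1)) (at h within V)"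
    if "h \<in> V" "s \<in> cbox 0 t" for h s
  proof -
    have "has_ddir (e\<^sub>x k) F ((s, x) + h *\<^sub>R e\<^sub>x k) (F' (s, x + h *\<^sub>R axis k 1))"
      using F'[OF V[OF that]] by (simp add: e\<^sub>x_def)
    from has_ddir_imp_has_vector_derivative[OF this]
    show ?thesis by (simp add: e\<^sub>x_def has_vector_derivative_at_within)
  qed
  moreover have "(\<lambda>s. F (s, x + h *\<^sub>R axis k 1)) integrable_on cbox 0 t" if "h \<in> V" for h
  proof -
    have "continuous_on (cbox 0 t) (\<lambda>s. F (s, x + h *\<^sub>R axis k 1))"
      by (rule continuous_on_compose2[OF cont_F]) (auto intro!: continuous_intros V that)
    then show ?thesis by (rule integrable_continuous)
  qed
  moreover have "continuous_on (V \<times> cbox 0 t) (\<lambda>(h, s). F' (s, x + h *\<^sub>R axis k 1))"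
  proof -
    have "continuous_on (V \<times> cbox 0 t) (\<lambda>z. F' (snd z, x + fst z *\<^sub>R axis k 1))"
      by (rule continuous_on_compose2[OF cont_F']) (auto intro!: continuous_intros V)
    then show ?thesis by (simp add: case_prod_beta')
  qed
  moreover have "convex V" "0 \<in> V" using \<delta> by (simp_all add: V_def)
  ultimately have "((\<lambda>h. integral (cbox 0 t) (\<lambda>s. F (s, x + h *\<^sub>R axis k 1))) has_vector_derivative
      integral (cbox 0 t) (\<lambda>s. F' (s, x + 0 *\<^sub>R axis k 1))) (at 0 within V)"
    by (intro leibniz_rule_vector_derivative) auto
  then show ?thesis
    unfolding has_ddir_def using at_within_open[of 0 V] \<delta> by (simp add: V_def)
qed

lemma space_ddir2_A_t:
  assumes t: "t \<in> {0..T}" and x: "x \<in> \<Omega>"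
  shows "ddir (e\<^sub>x k) (ddir (e\<^sub>x l) (ddir e\<^sub>t \<A>)) (t, x)
    = - (\<Sum>m\<in>UNIV. cross_axis m (Smat (ddir (e\<^sub>x k) (ddir (e\<^sub>x l) (ddir (e\<^sub>x m) \<Gamma>)) (t, x))))"
proof (rule has_ddir_space_unique[OF x])
  show "ddir (e\<^sub>x l) (ddir e\<^sub>t \<A>) (t, y)
      = - (\<Sum>m\<in>UNIV. cross_axis m (Smat (ddir (e\<^sub>x l) (ddir (e\<^sub>x m) \<Gamma>) (t, y))))" if "y \<in> \<Omega>" for y
    using space_ddir_A_t[OF t that] .
  show "has_ddir (e\<^sub>x k) (ddir (e\<^sub>x l) (ddir e\<^sub>t \<A>)) (t, x) (ddir (e\<^sub>x k) (ddir (e\<^sub>x l) (ddir e\<^sub>t \<A>)) (t, x))"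
    by (intro has_ddir_\<A> mem_U t x)
  show "has_ddir (e\<^sub>x k) (\<lambda>q. - (\<Sum>m\<in>UNIV. cross_axis m (Smat (ddir (e\<^sub>x l) (ddir (e\<^sub>x m) \<Gamma>) q)))) (t, x)
      (- (\<Sum>m\<in>UNIV. cross_axis m (Smat (ddir (e\<^sub>x k) (ddir (e\<^sub>x l) (ddir (e\<^sub>x m) \<Gamma>)) (t, x)))))"
    by (intro has_ddir_intros has_ddir_\<Gamma> mem_U t x)
qed

lemma space_ddir_divdiv_coords:
  assumes t: "t \<in> {0..T}" and x: "x \<in> \<Omega>"
  shows "(\<Sum>j\<in>UNIV. (\<Sum>m\<in>UNIV. Smat (ddir (e\<^sub>x k) (ddir (e\<^sub>x j) (ddir (e\<^sub>x m) \<Gamma>)) (t, x)) $ m) $ j) = 0"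
proof (rule has_ddir_space_unique[OF x])
  show "(\<Sum>j\<in>UNIV. (\<Sum>m\<in>UNIV. Smat (ddir (e\<^sub>x j) (ddir (e\<^sub>x m) \<Gamma>) (t, y)) $ m) $ j) = 0"
    if "y \<in> \<Omega>" for y
    using divdiv_coords[OF t that] .
  show "has_ddir (e\<^sub>x k) (\<lambda>q. \<Sum>j\<in>UNIV. (\<Sum>m\<in>UNIV. Smat (ddir (e\<^sub>x j) (ddir (e\<^sub>x m) \<Gamma>) q) $ m) $ j) (t, x)
      (\<Sum>j\<in>UNIV. (\<Sum>m\<in>UNIV. Smat (ddir (e\<^sub>x k) (ddir (e\<^sub>x j) (ddir (e\<^sub>x m) \<Gamma>)) (t, x)) $ m) $ j)"
    by (intro has_ddir_intros has_ddir_\<Gamma> mem_U t x)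
  show "has_ddir (e\<^sub>x k) (\<lambda>q. 0) (t, x) 0" by (rule has_ddir_const)
qed

text \<open>By \<open>\<gamma>_evol\<close>, \<open>div_sym_curl_\<A>\<close> is \<open>div S\<gamma>\<^sub>t\<close>; \<open>A_evol\<close> and the derivatives of
  \<open>div div S\<gamma> = 0\<close> turn its time derivative into \<open>div_S_def_div_S\<Gamma> = div S def (div S\<gamma>)\<close>.\<close>

definition div_sym_curl_\<A> :: "real \<times> vec3 \<Rightarrow> vec3" where
  "div_sym_curl_\<A> q = (\<Sum>k\<in>UNIV. symm (\<Sum>l\<in>UNIV. cross_axis l (ddir (e\<^sub>x k) (ddir (e\<^sub>x l) \<A>) q)) $ k)"

definition div_S_def_div_S\<Gamma> :: "real \<times> vec3 \<Rightarrow> vec3" where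
  "div_S_def_div_S\<Gamma> q = (\<Sum>k\<in>UNIV. Smat (symm (\<chi> i. div_S\<Gamma>'' k i q)) $ k)"

lemma has_ddir_time_div_sym_curl_\<A>:
  assumes t: "t \<in> {0..T}" and x: "x \<in> \<Omega>"
  shows "has_ddir e\<^sub>t div_sym_curl_\<A> (t, x) (div_S_def_div_S\<Gamma> (t, x))"
proof -
  define q where "q = (t, x)"
  have q: "q \<in> U" unfolding q_def by (rule mem_U[OF t x])
  define D where "D k l m = ddir (e\<^sub>x k) (ddir (e\<^sub>x l) (ddir (e\<^sub>x m) \<Gamma>)) q" for k l m
  have A_ttt: "ddir e\<^sub>t (ddir (e\<^sub>x k) (ddir (e\<^sub>x l) \<A>)) q = - (\<Sum>m\<in>UNIV. cross_axis m (Smat (D k l m)))"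
    for k l
    using ddir_commute_outer[OF smooth_\<A> q, of e\<^sub>t "e\<^sub>x k" "e\<^sub>x l"] space_ddir2_A_t[OF t x, of k l]
    by (simp add: D_def q_def)
  have "has_ddir e\<^sub>t div_sym_curl_\<A> q
      (\<Sum>k\<in>UNIV. symm (\<Sum>l\<in>UNIV. cross_axis l (ddir e\<^sub>t (ddir (e\<^sub>x k) (ddir (e\<^sub>x l) \<A>)) q)) $ k)"
    unfolding div_sym_curl_\<A>_def[abs_def] by (intro has_ddir_intros has_ddir_\<A> q)
  also have "(\<Sum>k\<in>UNIV. symm (\<Sum>l\<in>UNIV. cross_axis l (ddir e\<^sub>t (ddir (e\<^sub>x k) (ddir (e\<^sub>x l) \<A>)) q)) $ k)
      = (\<Sum>k\<in>UNIV. symm (\<Sum>l\<in>UNIV. cross_axis l (- (\<Sum>m\<in>UNIV. cross_axis m (Smat (D k l m))))) $ k)"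
    by (simp only: A_ttt)
  also have "\<dots> = (\<Sum>k\<in>UNIV. Smat (symm (\<chi> i. \<Sum>j\<in>UNIV. Smat (D k i j) $ j)) $ k)"
  proof (rule div_sym_curl_curl_eq_div_S_def_div)
    show "D k l m = D l k m" for k l m
      unfolding D_def by (rule ddir_commute[OF smooth_on_ddir[OF smooth_\<Gamma>] q])
    show "D k l m = D k m l" for k l m
      unfolding D_def by (rule ddir_commute_inner[OF smooth_\<Gamma> q])
    show "transpose (D k l m) = D k l m" for k l m
      using transpose_space_ddirs_\<Gamma>[OF t x, of "[k, l, m]"] by (simp add: D_def q_def)
    show "(\<Sum>j\<in>UNIV. (\<Sum>m\<in>UNIV. Smat (D k j m) $ m) $ j) = 0" for k
      unfolding D_def q_def by (rule space_ddir_divdiv_coords[OF t x])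
  qed
  also have "\<dots> = div_S_def_div_S\<Gamma> q"
    by (simp only: div_S_def_div_S\<Gamma>_def div_S\<Gamma>''_def D_def)
  finally show ?thesis by (simp add: q_def)
qed

lemma div_S_\<gamma>_t_coords:
  assumes t: "t \<in> {0..T}" and x: "x \<in> \<Omega>"
  shows "(\<Sum>k\<in>UNIV. Smat (ddir (e\<^sub>x k) (ddir e\<^sub>t \<Gamma>) (t, x)) $ k) = div_sym_curl_\<A> (t, x)"
proof -
  have "Smat (ddir (e\<^sub>x k) (ddir e\<^sub>t \<Gamma>) (t, x))
      = symm (\<Sum>l\<in>UNIV. cross_axis l (ddir (e\<^sub>x k) (ddir (e\<^sub>x l) \<A>) (t, x)))" for k
  proof (rule has_ddir_space_unique[OF x])
    show "Smat (ddir e\<^sub>t \<Gamma> (t, y)) = symm (\<Sum>l\<in>UNIV. cross_axis l (ddir (e\<^sub>x l) \<A> (t, y)))"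
      if "y \<in> \<Omega>" for y
      using \<gamma>_evol_coords[OF t that] .
    show "has_ddir (e\<^sub>x k) (\<lambda>q. Smat (ddir e\<^sub>t \<Gamma> q)) (t, x) (Smat (ddir (e\<^sub>x k) (ddir e\<^sub>t \<Gamma>) (t, x)))"
      by (intro has_ddir_intros has_ddir_\<Gamma> mem_U t x)
    show "has_ddir (e\<^sub>x k) (\<lambda>q. symm (\<Sum>l\<in>UNIV. cross_axis l (ddir (e\<^sub>x l) \<A> q))) (t, x)
        (symm (\<Sum>l\<in>UNIV. cross_axis l (ddir (e\<^sub>x k) (ddir (e\<^sub>x l) \<A>) (t, x))))"
      by (intro has_ddir_intros has_ddir_\<A> mem_U t x)
  qed
  then show ?thesis by (simp add: div_sym_curl_\<A>_def)
qed

lemma div_sym_curl_\<A>_increment: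
  assumes t: "t \<in> {0..T}" and x: "x \<in> \<Omega>"
  shows "div_sym_curl_\<A> (t, x) - div_sym_curl_\<A> (0, x)
    = (\<Sum>k\<in>UNIV. Smat (symm (\<chi> i. integral {0..t} (\<lambda>s. div_S\<Gamma>'' k i (s, x)))) $ k)"
proof -
  have "((\<lambda>s. div_S_def_div_S\<Gamma> (s, x)) has_integral (div_sym_curl_\<A> (t, x) - div_sym_curl_\<A> (0, x))) {0..t}"
  proof (rule fundamental_theorem_of_calculus)
    show "0 \<le> t" using t by simp
    fix s assume "s \<in> {0..t}"
    then have "s \<in> {0..T}" using t by auto
    from has_ddir_time_imp_has_vector_derivative[OF has_ddir_time_div_sym_curl_\<A>[OF this x]]
    show "((\<lambda>s. div_sym_curl_\<A> (s, x)) has_vector_derivative div_S_def_div_S\<Gamma> (s, x)) (at s within {0..t})"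
      by (rule has_vector_derivative_at_within)
  qed
  moreover have "((\<lambda>s. div_S_def_div_S\<Gamma> (s, x)) has_integral
      (\<Sum>k\<in>UNIV. Smat (symm (\<chi> i. integral {0..t} (\<lambda>s. div_S\<Gamma>'' k i (s, x)))) $ k)) {0..t}"
  proof -
    have "((\<lambda>s. div_S\<Gamma>'' k i (s, x)) has_integral integral {0..t} (\<lambda>s. div_S\<Gamma>'' k i (s, x))) {0..t}"
      for k i
    proof -
      have "continuous_on {0..t} (\<lambda>s. div_S\<Gamma>'' k i (s, x))"
        by (rule continuous_on_compose2[OF continuous_on_div_S\<Gamma>''])
          (use t x in \<open>auto intro!: continuous_intros mem_U\<close>)
      from integrable_continuous_interval[OF this] show ?thesis by (simp only: has_integral_integral)
    qed
    then have "((\<lambda>s. Smat (symm (\<chi> i. div_S\<Gamma>'' k i (s, x))) $ k) has_integral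
        Smat (symm (\<chi> i. integral {0..t} (\<lambda>s. div_S\<Gamma>'' k i (s, x)))) $ k) {0..t}" for k
      using has_integral_linear[OF has_integral_vec_lambda, of _ _ _ "\<lambda>M. Smat (symm M) $ k"]
      by (simp add: o_def bounded_linear_compose[OF bounded_linear_vec_nth]
          bounded_linear_compose[OF bounded_linear_Smat bounded_linear_symm])
    then show ?thesis unfolding div_S_def_div_S\<Gamma>_def by (intro has_integral_sum) auto
  qed
  ultimately show ?thesis by (rule has_integral_unique)
qed

lemma div_sym_curl_\<A>_initial:
  assumes x: "x \<in> \<Omega>"
  shows "div_sym_curl_\<A> (0, x)
    = (\<Sum>k\<in>UNIV. Smat (2 *\<^sub>R symm (\<chi> i. vskw (ddir (e\<^sub>x k) (ddir (e\<^sub>x i) \<A>) (0, x)))) $ k)"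
  unfolding div_sym_curl_\<A>_def
proof (rule div_sym_curl_eq_div_S_def_vskw)
  show "ddir (e\<^sub>x k) (ddir (e\<^sub>x l) \<A>) (0, x) = ddir (e\<^sub>x l) (ddir (e\<^sub>x k) \<A>) (0, x)" for k l
    by (rule ddir_commute[OF smooth_\<A> mem_U_0[OF x]])
  show "(\<Sum>j\<in>UNIV. ddir (e\<^sub>x k) (ddir (e\<^sub>x j) \<A>) (0, x) $ j) = 0" for k
  proof (rule has_ddir_space_unique[OF x])
    show "(\<Sum>j\<in>UNIV. ddir (e\<^sub>x j) \<A> (0, y) $ j) = 0" if "y \<in> \<Omega>" for y
      using div_A_coords[OF _ that] T_pos by simp
    show "has_ddir (e\<^sub>x k) (\<lambda>q. \<Sum>j\<in>UNIV. ddir (e\<^sub>x j) \<A> q $ j) (0, x)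
        (\<Sum>j\<in>UNIV. ddir (e\<^sub>x k) (ddir (e\<^sub>x j) \<A>) (0, x) $ j)"
      by (intro has_ddir_intros has_ddir_\<A> mem_U_0 x)
    show "has_ddir (e\<^sub>x k) (\<lambda>q. 0) (0, x) 0" by (rule has_ddir_const)
  qed
qed

end

context york_gauge
begin

lemma \<beta>_coords:
  assumes t: "t \<in> {0..T}" and y: "y \<in> \<Omega>"
  shows "\<beta> t y = (1/2) *\<^sub>R integral {0..t} (\<lambda>s. div_S\<Gamma> (s, y)) + vskw (\<A> (0, y))"
proof -
  have "integral {0..t} (\<lambda>s. divM (\<lambda>y. Smat (\<gamma> s y)) y) = integral {0..t} (\<lambda>s. div_S\<Gamma> (s, y))"
    by (rule integral_cong) (use divM_S\<gamma> mem_U y t in auto)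
  moreover have "A\<^sub>0 y = \<A> (0, y)" using A_init[OF y] by (simp add: \<A>_def)
  ultimately show ?thesis by (simp add: \<beta>_eq)
qed

lemma pd_\<beta>:
  assumes t: "t \<in> {0..T}" and y: "y \<in> \<Omega>"
  shows "pd i (\<beta> t) y = (1/2) *\<^sub>R integral {0..t} (\<lambda>s. div_S\<Gamma>' i (s, y)) + vskw (ddir (e\<^sub>x i) \<A> (0, y))"
proof -
  have "has_ddir (axis i 1) (\<lambda>y. (1/2) *\<^sub>R integral {0..t} (\<lambda>s. div_S\<Gamma> (s, y)) + vskw (\<A> (0, y))) y
      ((1/2) *\<^sub>R integral {0..t} (\<lambda>s. div_S\<Gamma>' i (s, y)) + vskw (ddir (e\<^sub>x i) \<A> (0, y)))"
    by (intro has_ddir_intros has_ddir_slice has_ddir_\<A> mem_U_0 y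
        has_ddir_space_integral[OF continuous_on_div_S\<Gamma> continuous_on_div_S\<Gamma>' has_ddir_div_S\<Gamma> t y])
  then have "has_ddir (axis i 1) (\<beta> t) y
      ((1/2) *\<^sub>R integral {0..t} (\<lambda>s. div_S\<Gamma>' i (s, y)) + vskw (ddir (e\<^sub>x i) \<A> (0, y)))"
    by (rule has_ddir_transform_open[OF open_\<Omega> y, rotated]) (simp add: \<beta>_coords[OF t])
  then show ?thesis by (simp add: pd_eq_ddir has_ddir_imp_ddir_eq)
qed

definition ddef_\<beta> :: "real \<Rightarrow> vec3 \<Rightarrow> 3 \<Rightarrow> mat3" where
  "ddef_\<beta> t x k = symm (\<chi> i. (1/2) *\<^sub>R integral {0..t} (\<lambda>s. div_S\<Gamma>'' k i (s, x))
    + vskw (ddir (e\<^sub>x k) (ddir (e\<^sub>x i) \<A>) (0, x)))"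

lemma has_ddir_def_\<beta>:
  assumes t: "t \<in> {0..T}" and x: "x \<in> \<Omega>"
  shows "has_ddir (axis k 1) (defv (\<beta> t)) x (ddef_\<beta> t x k)"
proof -
  have "has_ddir (axis k 1)
      (\<lambda>y. symm (\<chi> i. (1/2) *\<^sub>R integral {0..t} (\<lambda>s. div_S\<Gamma>' i (s, y)) + vskw (ddir (e\<^sub>x i) \<A> (0, y)))) x
      (ddef_\<beta> t x k)"
    unfolding ddef_\<beta>_def
    by (intro has_ddir_intros has_ddir_slice has_ddir_\<A> mem_U_0 x
        has_ddir_space_integral[OF continuous_on_div_S\<Gamma>' continuous_on_div_S\<Gamma>'' has_ddir_div_S\<Gamma>' t x])
  then show ?thesis
    by (rule has_ddir_transform_open[OF open_\<Omega> x, rotated]) (simp add: defv_def gradv_eq_rows pd_\<beta>[OF t])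
qed

lemma pd_S_gauge:
  assumes t: "t \<in> {0..T}" and x: "x \<in> \<Omega>"
  shows "pd k (\<lambda>y. Smat (dt T \<gamma> t y - 2 *\<^sub>R defv (\<beta> t) y)) x
    = Smat (ddir (e\<^sub>x k) (ddir e\<^sub>t \<Gamma>) (t, x) - 2 *\<^sub>R ddef_\<beta> t x k)"
proof -
  have "has_ddir (axis k 1) (\<lambda>y. Smat (ddir e\<^sub>t \<Gamma> (t, y) - 2 *\<^sub>R defv (\<beta> t) y)) x
      (Smat (ddir (e\<^sub>x k) (ddir e\<^sub>t \<Gamma>) (t, x) - 2 *\<^sub>R ddef_\<beta> t x k))"
    by (intro has_ddir_intros has_ddir_slice has_ddir_\<Gamma> mem_U t x has_ddir_def_\<beta>)
  then have "has_ddir (axis k 1) (\<lambda>y. Smat (dt T \<gamma> t y - 2 *\<^sub>R defv (\<beta> t) y)) x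
      (Smat (ddir (e\<^sub>x k) (ddir e\<^sub>t \<Gamma>) (t, x) - 2 *\<^sub>R ddef_\<beta> t x k))"
    by (rule has_ddir_transform_open[OF open_\<Omega> x, rotated]) (simp add: dt_\<gamma>[OF t])
  then show ?thesis by (simp add: pd_eq_ddir has_ddir_imp_ddir_eq)
qed

theorem york_momentum_constraint:
  assumes t: "t \<in> {0..T}" and x: "x \<in> \<Omega>"
  shows "divM (\<lambda>y. Smat (dt T \<gamma> t y - 2 *\<^sub>R defv (\<beta> t) y)) x = 0"
proof -
  have "divM (\<lambda>y. Smat (dt T \<gamma> t y - 2 *\<^sub>R defv (\<beta> t) y)) x
      = (\<Sum>k\<in>UNIV. Smat (ddir (e\<^sub>x k) (ddir e\<^sub>t \<Gamma>) (t, x)) $ k)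
        - (\<Sum>k\<in>UNIV. Smat (symm (\<chi> i. integral {0..t} (\<lambda>s. div_S\<Gamma>'' k i (s, x)))) $ k)
        - (\<Sum>k\<in>UNIV. Smat (2 *\<^sub>R symm (\<chi> i. vskw (ddir (e\<^sub>x k) (ddir (e\<^sub>x i) \<A>) (0, x)))) $ k)"
    unfolding divM_eq_sum pd_S_gauge[OF t x] ddef_\<beta>_def by (rule div_S_gauge_split)
  also have "\<dots> = div_sym_curl_\<A> (t, x) - (div_sym_curl_\<A> (t, x) - div_sym_curl_\<A> (0, x))
      - div_sym_curl_\<A> (0, x)"
    by (simp only: div_S_\<gamma>_t_coords[OF t x] div_sym_curl_\<A>_increment[OF t x, symmetric]
        div_sym_curl_\<A>_initial[OF x, symmetric])
  finally show ?thesis by simp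
qed

end

theorem theorem2p1:
  fixes \<Omega> :: "vec3 set" and T :: real
    and A \<gamma> :: "real \<Rightarrow> vec3 \<Rightarrow> mat3"
    and A0 \<gamma>0 :: "vec3 \<Rightarrow> mat3"
    and \<alpha> :: "real \<Rightarrow> vec3 \<Rightarrow> real" and \<beta> :: "real \<Rightarrow> vec3 \<Rightarrow> vec3"
  assumes "open \<Omega>" and "T > 0"
    and smooth: "\<exists>a b. a < 0 \<and> T < b \<and>
                   smooth_on ({a<..<b} \<times> \<Omega>) (\<lambda>(t, x). A t x) \<and>
                   smooth_on ({a<..<b} \<times> \<Omega>) (\<lambda>(t, x). \<gamma> t x)"
    and A_tf: "\<And>t x. t \<in> {0..T} \<Longrightarrow> x \<in> \<Omega> \<Longrightarrow> tracefree_mat (A t x)"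
    and \<gamma>_sym: "\<And>t x. t \<in> {0..T} \<Longrightarrow> x \<in> \<Omega> \<Longrightarrow> symmetric_mat (\<gamma> t x)"
    and eq1: "\<And>t x. t \<in> {0..T} \<Longrightarrow> x \<in> \<Omega> \<Longrightarrow> divM (A t) x = 0"
    and eq2: "\<And>t x. t \<in> {0..T} \<Longrightarrow> x \<in> \<Omega> \<Longrightarrow>
                dt T A t x + curlM (\<lambda>y. Smat (\<gamma> t y)) x = 0"
    and eq3: "\<And>t x. t \<in> {0..T} \<Longrightarrow> x \<in> \<Omega> \<Longrightarrow>
                Smat (dt T \<gamma> t x) - symm (curlM (A t) x) = 0"
    and eq4: "\<And>t x. t \<in> {0..T} \<Longrightarrow> x \<in> \<Omega> \<Longrightarrow> divdiv (\<lambda>y. Smat (\<gamma> t y)) x = 0"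
    and init_A: "\<And>x. x \<in> \<Omega> \<Longrightarrow> A 0 x = A0 x"
    and init_\<gamma>: "\<And>x. x \<in> \<Omega> \<Longrightarrow> \<gamma> 0 x = \<gamma>0 x"
    and \<alpha>_def: "\<And>t x. \<alpha> t x = (1/2) * trace (\<gamma> t x)"
    and \<beta>_def: "\<And>t x. \<beta> t x =
                 (1/2) *\<^sub>R integral {0..t} (\<lambda>s. divM (\<lambda>y. Smat (\<gamma> s y)) x) + vskw (A0 x)"
  shows "\<forall>t\<in>{0..T}. \<forall>x\<in>\<Omega>.
           dt T (dt T \<gamma>) t x + Smat (inc (\<gamma> t) x) - 2 *\<^sub>R hess (\<alpha> t) x
             - 2 *\<^sub>R defv (dt T \<beta> t) x = 0
         \<and> divM (\<lambda>y. Smat (dt T \<gamma> t y - 2 *\<^sub>R defv (\<beta> t) y)) x = 0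
         \<and> divdiv (\<lambda>y. Smat (\<gamma> t y)) x = 0"
proof -
  obtain a b where "a < 0" "T < b"
    "smooth_on ({a<..<b} \<times> \<Omega>) (\<lambda>(t, x). A t x)" "smooth_on ({a<..<b} \<times> \<Omega>) (\<lambda>(t, x). \<gamma> t x)"
    using smooth by blast
  then interpret york_gauge \<Omega> T a b A \<gamma> A0 \<alpha> \<beta>
    using assms by unfold_locales auto
  show ?thesis
    using york_evolution york_momentum_constraint eq4 by blast
qed

end
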